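(* Let $(P,w)$ be a naturally labeled poset with $n$ elements. Then $$K_P(\mathbf x)=\sum_{\alpha\vDash n}\frac{\Psi_\alpha(\mathbf x)}{z_\alpha}\,|\mathcal L^*_\alpha(P,w)|.$$ In particular $K_P$ is $\Psi$-positive, i.e. has nonnegative coefficients in the basis $\{\Psi_\alpha\}$.
   Context: Compositions: $\alpha=(\alpha_1,\dots,\alpha_\ell)\vDash n$, $S_\alpha=\{\alpha_1,\dots,\alpha_1+\dots+\alpha_{\ell-1}\}$, blocks $B_i(\alpha)=\{\alpha_1+\dots+\alpha_{i-1}+1,\dots,\alpha_1+\dots+\alpha_i\}$, $\alpha\le\beta$ iff $S_\beta\subseteq S_\alpha$. $K_P(\mathbf x)=\sum_f\prod_{x\in P}x_{f(x)}$ over all maps $f:P\to\mathbb Z_{>0}$ with $x<_Py\Rightarrow f(x)\le f(y)$. $M_\alpha=\sum_{i_1<\dots<i_\ell}x_{i_1}^{\alpha_1}\cdots x_{i_\ell}^{\alpha_\ell}$; $z_\alpha=\prod_i i^{m_i}m_i!$ ($m_i$ = number of parts equal to $i$); $\pi(\gamma)=\prod_{i}(\gamma_1+\dots+\gamma_i)$; for $\alpha\le\beta$, $\pi(\alpha,\beta)=\prod_{i=1}^{\ell(\beta)}\pi(\alpha^{(i)})$ with $\alpha^{(i)}$ the parts $\alpha_j$ with $B_j(\alpha)\subseteq B_i(\beta)$; $\Psi_\alpha=z_\alpha\sum_{\beta\ge\alpha}\pi(\alpha,\beta)^{-1}M_\beta$. A labeled poset $(P,w)$ is a finite poset with a bijection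 $w:P\to[n]$, naturally labeled if $x<_Py\Rightarrow w(x)<w(y)$. $\mathcal L(P,w)=\{\sigma\in\mathfrak S_n:\sigma^{-1}(w(x))<\sigma^{-1}(w(y))\text{ whenever }x<_Py\}$. $\sigma\in\mathfrak S_n$ is $\alpha$-unimodal if on each block $[a,b]=B_i(\alpha)$ one has $\sigma_a>\dots>\sigma_k<\dots<\sigma_b$ for some $k$. $P_i^\alpha(\sigma)=\{w^{-1}(\sigma_j):j\in B_i(\alpha)\}$ with induced order. $\mathcal L^*_\alpha(P,w)$ is the set of $\alpha$-unimodal $\sigma\in\mathcal L(P,w)$ such that each $P_i^\alpha(\sigma)$ has a unique minimal element. *)

theory Defs
  imports Complex_Main "HOL-Library.FuncSet" "HOL-Combinatorics.Permutations"
begin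

definition composition :: "nat \<Rightarrow> nat list \<Rightarrow> bool" where
  "composition n \<alpha> \<longleftrightarrow> sum_list \<alpha> = n \<and> (\<forall>a\<in>set \<alpha>. 0 < a)"

definition compositions :: "nat \<Rightarrow> nat list set" where
  "compositions n = {\<alpha>. composition n \<alpha>}"

definition Sset :: "nat list \<Rightarrow> nat set" where
  "Sset \<alpha> = {sum_list (take i \<alpha>) | i. 1 \<le> i \<and> i < length \<alpha>}"

text \<open>Block B_i(alpha), 1-based index i.\<close>
definition block :: "nat list \<Rightarrow> nat \<Rightarrow> nat set" where
  "block \<alpha> i = {sum_list (take (i - 1) \<alpha>) + 1 .. sum_list (take i \<alpha>)}"

definition zcoef :: "nat list \<Rightarrow> nat" where
  "zcoef \<alpha> = (\<Prod>i\<in>set \<alpha>. i ^ count_list \<alpha> i * fact (count_list \<alpha> i))"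

definition pi1 :: "nat list \<Rightarrow> nat" where
  "pi1 \<gamma> = (\<Prod>i = 1..length \<gamma>. sum_list (take i \<gamma>))"

definition subcomp :: "nat list \<Rightarrow> nat list \<Rightarrow> nat \<Rightarrow> nat list" where
  "subcomp \<alpha> \<beta> i = map (\<lambda>j. \<alpha> ! (j - 1))
      (filter (\<lambda>j. block \<alpha> j \<subseteq> block \<beta> i) [1..<length \<alpha> + 1])"

definition pi2 :: "nat list \<Rightarrow> nat list \<Rightarrow> nat" where
  "pi2 \<alpha> \<beta> = (\<Prod>i = 1..length \<beta>. pi1 (subcomp \<alpha> \<beta> i))"

text \<open>Monomial quasisymmetric function M_beta evaluated with x_i = 0 for i > N.\<close>
definition Mq :: "nat \<Rightarrow> nat list \<Rightarrow> (nat \<Rightarrow> real) \<Rightarrow> real" where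
  "Mq N \<beta> x = (\<Sum>is \<in> {is. length is = length \<beta> \<and> sorted_wrt (<) is \<and> set is \<subseteq> {1..N}}.
       \<Prod>j<length \<beta>. x (is ! j) ^ (\<beta> ! j))"

definition Psi :: "nat \<Rightarrow> nat list \<Rightarrow> (nat \<Rightarrow> real) \<Rightarrow> real" where
  "Psi N \<alpha> x = real (zcoef \<alpha>) *
     (\<Sum>\<beta> \<in> {\<beta>. composition (sum_list \<alpha>) \<beta> \<and> Sset \<beta> \<subseteq> Sset \<alpha>}.
        Mq N \<beta> x / real (pi2 \<alpha> \<beta>))"

definition is_poset :: "'a set \<Rightarrow> ('a \<Rightarrow> 'a \<Rightarrow> bool) \<Rightarrow> bool" where
  "is_poset P le \<longleftrightarrow> finite P \<and>
     (\<forall>x\<in>P. le x x) \<and>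
     (\<forall>x\<in>P. \<forall>y\<in>P. le x y \<and> le y x \<longrightarrow> x = y) \<and>
     (\<forall>x\<in>P. \<forall>y\<in>P. \<forall>z\<in>P. le x y \<and> le y z \<longrightarrow> le x z)"

definition plt :: "('a \<Rightarrow> 'a \<Rightarrow> bool) \<Rightarrow> 'a \<Rightarrow> 'a \<Rightarrow> bool" where
  "plt le x y \<longleftrightarrow> le x y \<and> x \<noteq> y"

text \<open>K_P truncated to variables x_1..x_N: sum over order-preserving f : P -> {1..N}.\<close>
definition KP :: "'a set \<Rightarrow> ('a \<Rightarrow> 'a \<Rightarrow> bool) \<Rightarrow> nat \<Rightarrow> (nat \<Rightarrow> real) \<Rightarrow> real" where
  "KP P le N x = (\<Sum>f \<in> {f \<in> P \<rightarrow>\<^sub>E {1..N}. \<forall>p\<in>P. \<forall>q\<in>P. plt le p q \<longrightarrow> f p \<le> f q}.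
       \<Prod>p\<in>P. x (f p))"

definition naturally_labeled :: "'a set \<Rightarrow> ('a \<Rightarrow> 'a \<Rightarrow> bool) \<Rightarrow> ('a \<Rightarrow> nat) \<Rightarrow> bool" where
  "naturally_labeled P le w \<longleftrightarrow> (\<forall>x\<in>P. \<forall>y\<in>P. plt le x y \<longrightarrow> w x < w y)"

definition linext :: "'a set \<Rightarrow> ('a \<Rightarrow> 'a \<Rightarrow> bool) \<Rightarrow> ('a \<Rightarrow> nat) \<Rightarrow> nat \<Rightarrow> (nat \<Rightarrow> nat) set" where
  "linext P le w n = {\<sigma>. \<sigma> permutes {1..n} \<and>
      (\<forall>x\<in>P. \<forall>y\<in>P. plt le x y \<longrightarrow> inv \<sigma> (w x) < inv \<sigma> (w y))}"

definition unimodal_on :: "(nat \<Rightarrow> nat) \<Rightarrow> nat set \<Rightarrow> bool" where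
  "unimodal_on \<sigma> B \<longleftrightarrow> (\<exists>k\<in>B.
      (\<forall>j. j \<in> B \<and> j < k \<longrightarrow> \<sigma> j > \<sigma> (Suc j)) \<and>
      (\<forall>j. j \<in> B \<and> Suc j \<in> B \<and> k \<le> j \<longrightarrow> \<sigma> j < \<sigma> (Suc j)))"

definition alpha_unimodal :: "nat list \<Rightarrow> (nat \<Rightarrow> nat) \<Rightarrow> bool" where
  "alpha_unimodal \<alpha> \<sigma> \<longleftrightarrow> (\<forall>i\<in>{1..length \<alpha>}. unimodal_on \<sigma> (block \<alpha> i))"

definition Pblock :: "'a set \<Rightarrow> ('a \<Rightarrow> nat) \<Rightarrow> nat list \<Rightarrow> (nat \<Rightarrow> nat) \<Rightarrow> nat \<Rightarrow> 'a set" where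
  "Pblock P w \<alpha> \<sigma> i = {p \<in> P. w p \<in> \<sigma> ` block \<alpha> i}"

definition unique_minimal :: "('a \<Rightarrow> 'a \<Rightarrow> bool) \<Rightarrow> 'a set \<Rightarrow> bool" where
  "unique_minimal le Q \<longleftrightarrow> (\<exists>!m. m \<in> Q \<and> \<not> (\<exists>q\<in>Q. plt le q m))"

definition Lstar :: "'a set \<Rightarrow> ('a \<Rightarrow> 'a \<Rightarrow> bool) \<Rightarrow> ('a \<Rightarrow> nat) \<Rightarrow> nat \<Rightarrow> nat list \<Rightarrow> (nat \<Rightarrow> nat) set" where
  "Lstar P le w n \<alpha> = {\<sigma> \<in> linext P le w n. alpha_unimodal \<alpha> \<sigma> \<and>
      (\<forall>i\<in>{1..length \<alpha>}. unique_minimal le (Pblock P w \<alpha> \<sigma> i))}"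

end

theory Submission
  imports Defs
begin

text \<open>
  Both sides are built up one variable at a time. Grouping the order-preserving maps
  P \<rightarrow> {1..N+1} by the upset U on which they take the value N+1 gives
  K_P(x_1..x_{N+1}) = \<Sum>_U x_{N+1}^|U| K_{P-U}(x_1..x_N). Dually, \<Psi>_\<alpha>/z_\<alpha> acquires
  the new variable on a merged suffix \<gamma> of \<alpha>, with weight 1/\<pi>(\<gamma>).

  The two recursions are matched by indexing the right-hand side by decompositions of
  linear extensions of P into admissible blocks (labels first decreasing, then increasing;
  a unique minimal element). The blocks after a cut decompose an upset U, and for every
  poset Q the weights 1/\<pi> of its decompositions add up to 1: the last block must be the
  principal upset of one of the |Q| elements of Q, listed by increasing labels, and it
  contributes the factor |Q| to \<pi>. Finally, cutting a permutation into consecutive blocks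
  of sizes \<alpha> identifies L*_\<alpha>(P,w) with the decompositions of shape \<alpha>.
\<close>

section \<open>Monomial quasisymmetric functions in finitely many variables\<close>

definition increasing_index_lists :: "nat \<Rightarrow> nat \<Rightarrow> nat list set" where
  "increasing_index_lists N l = {ks. length ks = l \<and> sorted_wrt (<) ks \<and> set ks \<subseteq> {1..N}}"

lemma Mq_eq_sum_increasing_index_lists:
  "Mq N \<beta> x = (\<Sum>ks \<in> increasing_index_lists N (length \<beta>). \<Prod>j<length \<beta>. x (ks ! j) ^ (\<beta> ! j))"
  unfolding Mq_def increasing_index_lists_def by simp

lemma finite_increasing_index_lists: "finite (increasing_index_lists N l)"
  by (rule finite_subset[OF _ finite_lists_length_le[of "{1..N}" l]])
     (auto simp: increasing_index_lists_def)

lemma increasing_index_lists_0: "increasing_index_lists N 0 = {[]}"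
  by (auto simp: increasing_index_lists_def)

lemma Mq_no_vars: "Mq 0 \<beta> x = (if \<beta> = [] then 1 else 0)"
proof -
  have "increasing_index_lists 0 l = (if l = 0 then {[]} else {})" for l
    by (auto simp: increasing_index_lists_def)
  then show ?thesis by (simp add: Mq_eq_sum_increasing_index_lists)
qed

lemma increasing_index_lists_Suc:
  "increasing_index_lists (Suc N) (Suc l) =
     increasing_index_lists N (Suc l) \<union> (\<lambda>ks. ks @ [Suc N]) ` increasing_index_lists N l"
proof (intro equalityI subsetI)
  fix ks assume ks: "ks \<in> increasing_index_lists (Suc N) (Suc l)"
  then obtain ys y where ks_eq: "ks = ys @ [y]"
    by (cases ks rule: rev_exhaust) (auto simp: increasing_index_lists_def)
  have sorted: "sorted_wrt (<) (ys @ [y])" and range: "set (ys @ [y]) \<subseteq> {1..Suc N}"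
    and len: "length ys = l"
    using ks ks_eq by (auto simp: increasing_index_lists_def)
  show "ks \<in> increasing_index_lists N (Suc l) \<union> (\<lambda>ks. ks @ [Suc N]) ` increasing_index_lists N l"
  proof (cases "y = Suc N")
    case True
    then have "ys \<in> increasing_index_lists N l"
      using sorted range len
      by (auto simp: increasing_index_lists_def sorted_wrt_append less_Suc_eq_le)
    then show ?thesis using True ks_eq by auto
  next
    case False
    then have "Suc N \<notin> set ks"
      using sorted range ks_eq by (fastforce simp: sorted_wrt_append)
    then show ?thesis using ks by (auto simp: increasing_index_lists_def le_Suc_eq)
  qed
qed (auto simp: increasing_index_lists_def sorted_wrt_append less_Suc_eq_le subset_iff)

text \<open>Adding the variable \<open>x (Suc N)\<close>: it can only carry the last part of \<open>\<beta>\<close>.\<close>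

lemma Mq_Suc_vars:
  "Mq (Suc N) \<beta> x = Mq N \<beta> x +
     (if \<beta> = [] then 0 else x (Suc N) ^ last \<beta> * Mq N (butlast \<beta>) x)"
proof (cases \<beta> rule: rev_exhaust)
  case Nil
  then show ?thesis by (simp add: Mq_eq_sum_increasing_index_lists increasing_index_lists_0)
next
  case (snoc bs k)
  let ?I = "increasing_index_lists N (length bs)"
  let ?f = "\<lambda>ks. \<Prod>j<Suc (length bs). x (ks ! j) ^ ((bs @ [k]) ! j)"
  have disjoint: "increasing_index_lists N (Suc (length bs)) \<inter> (\<lambda>ks. ks @ [Suc N]) ` ?I = {}"
    by (auto simp: increasing_index_lists_def)
  have inj: "inj_on (\<lambda>ks. ks @ [Suc N]) ?I" by (auto simp: inj_on_def)
  have last_var: "?f (ks @ [Suc N]) = x (Suc N) ^ k * (\<Prod>j<length bs. x (ks ! j) ^ (bs ! j))"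
    if "ks \<in> ?I" for ks
  proof -
    have len: "length ks = length bs" using that by (simp add: increasing_index_lists_def)
    have "(\<Prod>j<length bs. x ((ks @ [Suc N]) ! j) ^ ((bs @ [k]) ! j)) =
        (\<Prod>j<length bs. x (ks ! j) ^ (bs ! j))"
      using len by (intro prod.cong) (auto simp: nth_append)
    then show ?thesis using len by (simp add: nth_append)
  qed
  have "Mq (Suc N) \<beta> x = Mq N \<beta> x + sum ?f ((\<lambda>ks. ks @ [Suc N]) ` ?I)"
    by (simp add: snoc Mq_eq_sum_increasing_index_lists increasing_index_lists_Suc
        sum.union_disjoint finite_increasing_index_lists disjoint)
  also have "sum ?f ((\<lambda>ks. ks @ [Suc N]) ` ?I) =
      (\<Sum>ks\<in>?I. x (Suc N) ^ k * (\<Prod>j<length bs. x (ks ! j) ^ (bs ! j)))"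
    unfolding sum.reindex[OF inj] comp_def by (rule sum.cong[OF refl last_var])
  also have "\<dots> = x (Suc N) ^ k * Mq N bs x"
    by (simp add: Mq_eq_sum_increasing_index_lists sum_distrib_left)
  finally show ?thesis using snoc by simp
qed

section \<open>Compositions and their coarsenings\<close>

lemma composition_iff: "composition n \<alpha> \<longleftrightarrow> sum_list \<alpha> = n \<and> 0 \<notin> set \<alpha>"
  by (auto simp: composition_def intro: gr0I)

lemma length_le_sum_list: "0 \<notin> set (\<beta> :: nat list) \<Longrightarrow> length \<beta> \<le> sum_list \<beta>"
  by (induction \<beta>) (auto simp: Suc_le_eq)

lemma sum_list_pos: "0 \<notin> set (\<alpha> :: nat list) \<Longrightarrow> \<alpha> \<noteq> [] \<Longrightarrow> 0 < sum_list \<alpha>"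
  by (cases \<alpha>) auto

lemma finite_compositions: "finite (compositions n)"
  by (rule finite_subset[OF _ finite_lists_length_le[of "{0..n}" n]])
     (auto simp: compositions_def composition_iff length_le_sum_list member_le_sum_list)

lemma sum_take_add_sum_take_drop:
  "i \<le> j \<Longrightarrow>
     sum_list (take j (\<alpha> :: nat list)) = sum_list (take i \<alpha>) + sum_list (take (j - i) (drop i \<alpha>))"
  by (metis le_add_diff_inverse sum_list_append take_add)

lemma sum_take_mono: "i \<le> j \<Longrightarrow> sum_list (take i (\<alpha> :: nat list)) \<le> sum_list (take j \<alpha>)"
  using sum_take_add_sum_take_drop[of i j \<alpha>] by linarith

lemma sum_take_strict_mono:
  fixes \<alpha> :: "nat list"
  assumes "0 \<notin> set \<alpha>" "i < j" "j \<le> length \<alpha>"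
  shows "sum_list (take i \<alpha>) < sum_list (take j \<alpha>)"
proof -
  have "0 < sum_list (take (j - i) (drop i \<alpha>))"
    using assms by (intro sum_list_pos) (auto dest: in_set_takeD in_set_dropD)
  then show ?thesis using sum_take_add_sum_take_drop[of i j \<alpha>] assms by simp
qed

lemma sum_take_inj:
  fixes \<alpha> :: "nat list"
  assumes "0 \<notin> set \<alpha>" "i \<le> length \<alpha>" "j \<le> length \<alpha>"
    and "sum_list (take i \<alpha>) = sum_list (take j \<alpha>)"
  shows "i = j"
  using sum_take_strict_mono[OF assms(1), of i j] sum_take_strict_mono[OF assms(1), of j i] assms
  by (cases i j rule: linorder_cases) auto

lemma sum_take_le_sum_list: "sum_list (take i (\<alpha> :: nat list)) \<le> sum_list \<alpha>"
  by (metis append_take_drop_id le_add1 sum_list_append)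

lemma Sset_snoc: "Sset (\<beta> @ [s]) = Sset \<beta> \<union> (if \<beta> = [] then {} else {sum_list \<beta>})"
proof -
  have "Sset (\<beta> @ [s]) = {sum_list (take i \<beta>) |i. 1 \<le> i \<and> i < Suc (length \<beta>)}"
    unfolding Sset_def by (intro Collect_cong ex_cong1) auto
  also have "\<dots> = Sset \<beta> \<union> (if \<beta> = [] then {} else {sum_list (take (length \<beta>) \<beta>)})"
    unfolding Sset_def by (auto simp: less_Suc_eq Suc_le_eq) (auto intro!: exI[of _ "length \<beta>"])
  finally show ?thesis by simp
qed

lemma Sset_less_sum_list: "x \<in> Sset \<beta> \<Longrightarrow> 0 \<notin> set \<beta> \<Longrightarrow> x < sum_list \<beta>"
  unfolding Sset_def using sum_take_strict_mono[of \<beta> _ "length \<beta>"] by fastforce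

lemma Sset_take:
  fixes \<alpha> :: "nat list"
  assumes "0 \<notin> set \<alpha>" "m \<le> length \<alpha>"
  shows "Sset (take m \<alpha>) = Sset \<alpha> \<inter> {..< sum_list (take m \<alpha>)}"
proof (intro equalityI subsetI)
  fix x assume "x \<in> Sset (take m \<alpha>)"
  then obtain i where "x = sum_list (take i (take m \<alpha>))" "1 \<le> i" "i < m"
    using assms unfolding Sset_def by auto
  then show "x \<in> Sset \<alpha> \<inter> {..< sum_list (take m \<alpha>)}"
    using assms sum_take_strict_mono[OF assms(1), of i m] unfolding Sset_def by (auto simp: min_def)
next
  fix x assume "x \<in> Sset \<alpha> \<inter> {..< sum_list (take m \<alpha>)}"
  then obtain i where i: "x = sum_list (take i \<alpha>)" "1 \<le> i" "x < sum_list (take m \<alpha>)"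
    unfolding Sset_def by auto
  then have "i < m" using sum_take_mono[of m i \<alpha>] by (metis not_le)
  then show "x \<in> Sset (take m \<alpha>)"
    using i assms unfolding Sset_def by (intro CollectI exI[of _ i]) (auto simp: min_def)
qed

definition coarsenings :: "nat list \<Rightarrow> nat list set" where
  "coarsenings \<alpha> = {\<beta>. composition (sum_list \<alpha>) \<beta> \<and> Sset \<beta> \<subseteq> Sset \<alpha>}"

lemma finite_coarsenings: "finite (coarsenings \<alpha>)"
  by (rule finite_subset[OF _ finite_compositions[of "sum_list \<alpha>"]])
     (auto simp: coarsenings_def compositions_def)

lemma Nil_in_coarsenings_iff: "0 \<notin> set \<alpha> \<Longrightarrow> [] \<in> coarsenings \<alpha> \<longleftrightarrow> \<alpha> = []"
  by (cases \<alpha>) (auto simp: coarsenings_def composition_iff Sset_def)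

definition snoc_merged_suffix :: "nat list \<Rightarrow> nat \<times> nat list \<Rightarrow> nat list" where
  "snoc_merged_suffix \<alpha> = (\<lambda>(m, \<beta>'). \<beta>' @ [sum_list (drop m \<alpha>)])"

lemma coarsening_eq_snoc_merged_suffix:
  assumes pos: "0 \<notin> set \<alpha>" and \<beta>: "\<beta> \<in> coarsenings \<alpha>" "\<beta> \<noteq> []"
  obtains m \<beta>' where "m < length \<alpha>" "\<beta>' \<in> coarsenings (take m \<alpha>)"
    "\<beta> = snoc_merged_suffix \<alpha> (m, \<beta>')"
proof -
  obtain \<beta>' s where \<beta>_eq: "\<beta> = \<beta>' @ [s]" using \<beta>(2) by (cases \<beta> rule: rev_exhaust) auto
  have sums: "sum_list \<beta> = sum_list \<alpha>" and pos_\<beta>: "0 \<notin> set \<beta>" and sub: "Sset \<beta> \<subseteq> Sset \<alpha>"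
    using \<beta>(1) by (auto simp: coarsenings_def composition_iff)
  have pos': "0 \<notin> set \<beta>'" using pos_\<beta> \<beta>_eq by simp
  obtain m where m: "m < length \<alpha>" "sum_list (take m \<alpha>) = sum_list \<beta>'"
  proof (cases "\<beta>' = []")
    case True
    have "\<alpha> \<noteq> []" using sums sum_list_pos[OF pos_\<beta>] \<beta>_eq by auto
    then show ?thesis using that[of 0] True by simp
  next
    case False
    then have "sum_list \<beta>' \<in> Sset \<alpha>" using sub \<beta>_eq Sset_snoc by auto
    then show ?thesis using that unfolding Sset_def by auto
  qed
  have "Sset \<beta>' \<subseteq> Sset (take m \<alpha>)"
    using sub \<beta>_eq Sset_snoc[of \<beta>' s] Sset_less_sum_list[OF _ pos'] m Sset_take[OF pos, of m]
    by auto
  then have "\<beta>' \<in> coarsenings (take m \<alpha>)"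
    using m pos' by (simp add: coarsenings_def composition_iff)
  moreover have "sum_list \<alpha> = sum_list (take m \<alpha>) + sum_list (drop m \<alpha>)"
    by (metis append_take_drop_id sum_list_append)
  then have "s = sum_list (drop m \<alpha>)" using sums m \<beta>_eq by simp
  ultimately show ?thesis using that m \<beta>_eq by (simp add: snoc_merged_suffix_def)
qed

lemma snoc_merged_suffix_in_coarsenings:
  assumes pos: "0 \<notin> set \<alpha>" and m: "m < length \<alpha>" and \<beta>': "\<beta>' \<in> coarsenings (take m \<alpha>)"
  shows "snoc_merged_suffix \<alpha> (m, \<beta>') \<in> coarsenings \<alpha>"
proof -
  have sums: "sum_list \<beta>' = sum_list (take m \<alpha>)" and pos': "0 \<notin> set \<beta>'"
    and sub: "Sset \<beta>' \<subseteq> Sset (take m \<alpha>)"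
    using \<beta>' by (auto simp: coarsenings_def composition_iff)
  have "0 < sum_list (drop m \<alpha>)"
    using pos m by (intro sum_list_pos) (auto dest: in_set_dropD)
  moreover have "sum_list \<beta>' \<in> Sset \<alpha>" if "\<beta>' \<noteq> []"
  proof -
    have "0 < m" using sum_list_pos[OF pos' that] sums by (cases m) auto
    then show ?thesis using sums m unfolding Sset_def by auto
  qed
  moreover have "Sset \<beta>' \<subseteq> Sset \<alpha>" using sub Sset_take[OF pos, of m] m by auto
  moreover have "sum_list \<alpha> = sum_list (take m \<alpha>) + sum_list (drop m \<alpha>)"
    by (metis append_take_drop_id sum_list_append)
  ultimately show ?thesis
    using sums pos'
    by (auto simp: snoc_merged_suffix_def coarsenings_def composition_iff Sset_snoc
        simp del: sum_list_eq_0_iff)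
qed

lemma nonempty_coarsenings_eq:
  assumes "0 \<notin> set \<alpha>"
  shows "{\<beta> \<in> coarsenings \<alpha>. \<beta> \<noteq> []} =
           snoc_merged_suffix \<alpha> ` (SIGMA m:{..<length \<alpha>}. coarsenings (take m \<alpha>))"
proof (intro equalityI subsetI)
  fix \<beta> assume "\<beta> \<in> {\<beta> \<in> coarsenings \<alpha>. \<beta> \<noteq> []}"
  then obtain m \<beta>' where "m < length \<alpha>" "\<beta>' \<in> coarsenings (take m \<alpha>)"
    "\<beta> = snoc_merged_suffix \<alpha> (m, \<beta>')"
    using coarsening_eq_snoc_merged_suffix[OF assms, of \<beta>] by auto
  then show "\<beta> \<in> snoc_merged_suffix \<alpha> ` (SIGMA m:{..<length \<alpha>}. coarsenings (take m \<alpha>))"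
    by blast
next
  fix \<beta> assume "\<beta> \<in> snoc_merged_suffix \<alpha> ` (SIGMA m:{..<length \<alpha>}. coarsenings (take m \<alpha>))"
  then show "\<beta> \<in> {\<beta> \<in> coarsenings \<alpha>. \<beta> \<noteq> []}"
    using snoc_merged_suffix_in_coarsenings[OF assms] by (auto simp: snoc_merged_suffix_def)
qed

lemma inj_on_snoc_merged_suffix:
  assumes "0 \<notin> set \<alpha>"
  shows "inj_on (snoc_merged_suffix \<alpha>) (SIGMA m:{..<length \<alpha>}. coarsenings (take m \<alpha>))"
proof (rule inj_onI, clarsimp simp: snoc_merged_suffix_def)
  fix m1 m2 \<beta>
  assume "m1 < length \<alpha>" "m2 < length \<alpha>" "\<beta> \<in> coarsenings (take m1 \<alpha>)" "\<beta> \<in> coarsenings (take m2 \<alpha>)"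
  then show "m1 = m2"
    using sum_take_inj[OF assms, of m1 m2] by (auto simp: coarsenings_def composition_iff)
qed

lemma block_Suc:
  "i < length \<alpha> \<Longrightarrow> block \<alpha> (Suc i) = {sum_list (take i \<alpha>) + 1 .. sum_list (take i \<alpha>) + \<alpha> ! i}"
  by (simp add: block_def take_Suc_conv_app_nth)

lemma block_nonempty:
  assumes "0 \<notin> set \<alpha>" "1 \<le> j" "j \<le> length \<alpha>"
  shows "block \<alpha> j \<noteq> {}"
  using sum_take_strict_mono[OF assms(1), of "j - 1" j] assms by (simp add: block_def)

lemma block_subset_atMost: "j \<le> m \<Longrightarrow> block \<alpha> j \<subseteq> {..sum_list (take m \<alpha>)}"
  using sum_take_mono[of j m \<alpha>] by (auto simp: block_def)

lemma block_subset_greaterThan: "m < j \<Longrightarrow> block \<alpha> j \<subseteq> {sum_list (take m \<alpha>)<..}"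
  using sum_take_mono[of m "j - 1" \<alpha>] by (force simp: block_def)

lemma block_subset_sum_list: "block \<alpha> j \<subseteq> {..sum_list \<alpha>}"
  using sum_take_le_sum_list[of j \<alpha>] by (auto simp: block_def)

lemma block_take: "j \<le> m \<Longrightarrow> block (take m \<alpha>) j = block \<alpha> j"
  using diff_le_self[of j 1] by (simp add: block_def min_def del: diff_le_self)

lemma block_snoc: "i \<le> length \<beta> \<Longrightarrow> block (\<beta> @ [s]) i = block \<beta> i"
  by (simp add: block_def)

lemma block_snoc_last: "block (\<beta> @ [s]) (Suc (length \<beta>)) = {sum_list \<beta> + 1 .. sum_list \<beta> + s}"
  by (simp add: block_def)

lemma map_nth_pred_upt: "map (\<lambda>j. \<alpha> ! (j - 1)) [m + 1..<length \<alpha> + 1] = drop m \<alpha>"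
  by (rule nth_equalityI) (simp_all del: upt_Suc add: nth_upt)

lemma block_not_subset_atMost:
  assumes "0 \<notin> set \<alpha>" "m < j" "j \<le> length \<alpha>"
  shows "\<not> block \<alpha> j \<subseteq> {..sum_list (take m \<alpha>)}"
proof -
  obtain y where "y \<in> block \<alpha> j" using block_nonempty[of \<alpha> j] assms by auto
  then show ?thesis using block_subset_greaterThan[OF assms(2)] by fastforce
qed

lemma block_not_subset_greaterThan:
  assumes "0 \<notin> set \<alpha>" "1 \<le> j" "j \<le> m" "m \<le> length \<alpha>"
  shows "\<not> block \<alpha> j \<subseteq> {sum_list (take m \<alpha>)<..}"
proof -
  obtain y where "y \<in> block \<alpha> j" using block_nonempty[of \<alpha> j] assms by auto
  then show ?thesis using block_subset_atMost[OF assms(3)] by fastforce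
qed

lemma upt_1_split: "m \<le> l \<Longrightarrow> [1..<l + 1] = [1..<m + 1] @ [m + 1..<l + 1]"
  using upt_add_eq_append[of 1 "m + 1" "l - m"] by simp

lemma subcomp_snoc_merged_suffix:
  assumes pos: "0 \<notin> set \<alpha>" and m: "m < length \<alpha>" and sums: "sum_list \<beta>' = sum_list (take m \<alpha>)"
    and i: "1 \<le> i" "i \<le> length \<beta>'"
  shows "subcomp \<alpha> (\<beta>' @ [sum_list (drop m \<alpha>)]) i = subcomp (take m \<alpha>) \<beta>' i"
proof -
  let ?\<beta> = "\<beta>' @ [sum_list (drop m \<alpha>)]"
  have block_i: "block ?\<beta> i = block \<beta>' i" using i block_snoc by blast
  have "block \<beta>' i \<subseteq> {..sum_list (take m \<alpha>)}"
    using block_subset_atMost[of i "length \<beta>'" \<beta>'] i sums by simp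
  then have "\<not> block \<alpha> j \<subseteq> block \<beta>' i" if "j \<in> set [m + 1..<length \<alpha> + 1]" for j
    using block_not_subset_atMost[OF pos, of m j] that by auto
  then have "filter (\<lambda>j. block \<alpha> j \<subseteq> block ?\<beta> i) [m + 1..<length \<alpha> + 1] = []"
    unfolding block_i by (intro filter_False) blast
  moreover have "filter (\<lambda>j. block \<alpha> j \<subseteq> block ?\<beta> i) [1..<m + 1] =
      filter (\<lambda>j. block (take m \<alpha>) j \<subseteq> block \<beta>' i) [1..<m + 1]"
    by (rule filter_cong) (auto simp: block_i block_take)
  ultimately show ?thesis
    unfolding subcomp_def upt_1_split[OF less_imp_le[OF m]] filter_append
    using m by (intro map_cong) auto
qed

lemma subcomp_snoc_merged_suffix_last:
  assumes pos: "0 \<notin> set \<alpha>" and m: "m < length \<alpha>" and sums: "sum_list \<beta>' = sum_list (take m \<alpha>)"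
  shows "subcomp \<alpha> (\<beta>' @ [sum_list (drop m \<alpha>)]) (Suc (length \<beta>')) = drop m \<alpha>"
proof -
  let ?B = "block (\<beta>' @ [sum_list (drop m \<alpha>)]) (Suc (length \<beta>'))"
  have "sum_list \<alpha> = sum_list (take m \<alpha>) + sum_list (drop m \<alpha>)"
    by (metis append_take_drop_id sum_list_append)
  then have block_last: "?B = {sum_list (take m \<alpha>) + 1 .. sum_list \<alpha>}"
    using block_snoc_last[of \<beta>'] sums by simp
  have low: "filter (\<lambda>j. block \<alpha> j \<subseteq> ?B) [1..<m + 1] = []"
    unfolding block_last using block_not_subset_greaterThan[OF pos _ _ less_imp_le[OF m]]
    by (intro filter_False) fastforce
  have high: "filter (\<lambda>j. block \<alpha> j \<subseteq> ?B) [m + 1..<length \<alpha> + 1] = [m + 1..<length \<alpha> + 1]"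
    using block_subset_greaterThan[of m _ \<alpha>] block_subset_sum_list[of \<alpha>]
    unfolding block_last by (intro filter_True) (auto simp: subset_iff Suc_le_eq)
  show ?thesis
    unfolding subcomp_def upt_1_split[OF less_imp_le[OF m]] filter_append low high append_Nil
      map_nth_pred_upt ..
qed

lemma pi2_snoc_merged_suffix:
  assumes "0 \<notin> set \<alpha>" "m < length \<alpha>" "sum_list \<beta>' = sum_list (take m \<alpha>)"
  shows "pi2 \<alpha> (\<beta>' @ [sum_list (drop m \<alpha>)]) = pi2 (take m \<alpha>) \<beta>' * pi1 (drop m \<alpha>)"
proof -
  have "pi2 \<alpha> (\<beta>' @ [sum_list (drop m \<alpha>)]) =
      (\<Prod>i = 1..length \<beta>'. pi1 (subcomp \<alpha> (\<beta>' @ [sum_list (drop m \<alpha>)]) i)) *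
      pi1 (subcomp \<alpha> (\<beta>' @ [sum_list (drop m \<alpha>)]) (Suc (length \<beta>')))"
    by (simp add: pi2_def)
  also have "(\<Prod>i = 1..length \<beta>'. pi1 (subcomp \<alpha> (\<beta>' @ [sum_list (drop m \<alpha>)]) i)) =
      pi2 (take m \<alpha>) \<beta>'"
    unfolding pi2_def
    by (rule prod.cong[OF refl]) (simp add: subcomp_snoc_merged_suffix[OF assms])
  finally show ?thesis by (simp add: subcomp_snoc_merged_suffix_last[OF assms])
qed

lemma pi1_snoc: "pi1 (\<alpha> @ [a]) = pi1 \<alpha> * sum_list (\<alpha> @ [a])"
proof -
  have "(\<Prod>i = 1..length \<alpha>. sum_list (take i (\<alpha> @ [a]))) = pi1 \<alpha>"
    unfolding pi1_def by (rule prod.cong) auto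
  then show ?thesis by (simp add: pi1_def)
qed

section \<open>The normalized power sum quasisymmetric functions\<close>

definition Psi_over_z :: "nat \<Rightarrow> nat list \<Rightarrow> (nat \<Rightarrow> real) \<Rightarrow> real" where
  "Psi_over_z N \<alpha> x = (\<Sum>\<beta>\<in>coarsenings \<alpha>. Mq N \<beta> x / real (pi2 \<alpha> \<beta>))"

lemma zcoef_pos: "0 \<notin> set \<alpha> \<Longrightarrow> 0 < zcoef \<alpha>"
  unfolding zcoef_def by (rule prod_pos) (auto intro: gr0I)

lemma Psi_over_z_eq: "0 \<notin> set \<alpha> \<Longrightarrow> Psi N \<alpha> x / real (zcoef \<alpha>) = Psi_over_z N \<alpha> x"
  using zcoef_pos[of \<alpha>] by (simp add: Psi_def Psi_over_z_def coarsenings_def)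

lemma Psi_over_z_no_vars: "0 \<notin> set \<alpha> \<Longrightarrow> Psi_over_z 0 \<alpha> x = (if \<alpha> = [] then 1 else 0)"
proof -
  assume pos: "0 \<notin> set \<alpha>"
  have "Psi_over_z 0 \<alpha> x = (\<Sum>\<beta>\<in>coarsenings \<alpha>. if \<beta> = [] then 1 / real (pi2 \<alpha> \<beta>) else 0)"
    unfolding Psi_over_z_def Mq_no_vars by (rule sum.cong) auto
  also have "\<dots> = (if [] \<in> coarsenings \<alpha> then 1 / real (pi2 \<alpha> []) else 0)"
    by (rule sum.delta[OF finite_coarsenings])
  finally show ?thesis using Nil_in_coarsenings_iff[OF pos] by (simp add: pi2_def)
qed

lemma Psi_over_z_Suc_vars:
  assumes pos: "0 \<notin> set \<alpha>"
  shows "Psi_over_z (Suc N) \<alpha> x = Psi_over_z N \<alpha> x +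
    (\<Sum>m<length \<alpha>. x (Suc N) ^ sum_list (drop m \<alpha>) / real (pi1 (drop m \<alpha>)) *
       Psi_over_z N (take m \<alpha>) x)"
proof -
  let ?g = "\<lambda>\<beta>. x (Suc N) ^ last \<beta> * Mq N (butlast \<beta>) x / real (pi2 \<alpha> \<beta>)"
  let ?S = "SIGMA m:{..<length \<alpha>}. coarsenings (take m \<alpha>)"
  have "Psi_over_z (Suc N) \<alpha> x = Psi_over_z N \<alpha> x + (\<Sum>\<beta>\<in>coarsenings \<alpha>. if \<beta> \<noteq> [] then ?g \<beta> else 0)"
    unfolding Psi_over_z_def Mq_Suc_vars sum.distrib[symmetric]
    by (rule sum.cong) (auto simp: add_divide_distrib)
  also have "(\<Sum>\<beta>\<in>coarsenings \<alpha>. if \<beta> \<noteq> [] then ?g \<beta> else 0) = sum ?g {\<beta>\<in>coarsenings \<alpha>. \<beta> \<noteq> []}"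
    by (rule sum.inter_filter[OF finite_coarsenings, symmetric])
  also have "\<dots> = sum (?g \<circ> snoc_merged_suffix \<alpha>) ?S"
    unfolding nonempty_coarsenings_eq[OF pos]
    by (rule sum.reindex[OF inj_on_snoc_merged_suffix[OF pos]])
  also have "\<dots> = (\<Sum>(m, \<beta>')\<in>?S. (?g \<circ> snoc_merged_suffix \<alpha>) (m, \<beta>'))"
    by (rule sum.cong) auto
  also have "\<dots> = (\<Sum>m<length \<alpha>. \<Sum>\<beta>'\<in>coarsenings (take m \<alpha>). (?g \<circ> snoc_merged_suffix \<alpha>) (m, \<beta>'))"
    by (rule sum.Sigma[symmetric]) (auto simp: finite_coarsenings)
  also have "\<dots> = (\<Sum>m<length \<alpha>. \<Sum>\<beta>'\<in>coarsenings (take m \<alpha>).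
      x (Suc N) ^ sum_list (drop m \<alpha>) / real (pi1 (drop m \<alpha>)) *
      (Mq N \<beta>' x / real (pi2 (take m \<alpha>) \<beta>')))"
    by (intro sum.cong refl)
       (simp add: snoc_merged_suffix_def pi2_snoc_merged_suffix[OF pos] coarsenings_def
         composition_iff)
  finally show ?thesis by (simp add: Psi_over_z_def sum_distrib_left)
qed

section \<open>Order-preserving maps and upsets\<close>

definition is_upset :: "('a \<Rightarrow> 'a \<Rightarrow> bool) \<Rightarrow> 'a set \<Rightarrow> 'a set \<Rightarrow> bool" where
  "is_upset le Q U \<longleftrightarrow> U \<subseteq> Q \<and> (\<forall>p\<in>U. \<forall>q\<in>Q - U. \<not> plt le p q)"

definition upsets :: "('a \<Rightarrow> 'a \<Rightarrow> bool) \<Rightarrow> 'a set \<Rightarrow> 'a set set" where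
  "upsets le Q = {U. is_upset le Q U}"

lemma finite_upsets: "finite Q \<Longrightarrow> finite (upsets le Q)"
  unfolding upsets_def is_upset_def by (rule finite_subset[of _ "Pow Q"]) auto

lemma empty_in_upsets: "{} \<in> upsets le Q"
  by (simp add: upsets_def is_upset_def)

definition order_preserving_maps :: "'a set \<Rightarrow> ('a \<Rightarrow> 'a \<Rightarrow> bool) \<Rightarrow> nat \<Rightarrow> ('a \<Rightarrow> nat) set" where
  "order_preserving_maps Q le N = {f \<in> Q \<rightarrow>\<^sub>E {1..N}. \<forall>p\<in>Q. \<forall>q\<in>Q. plt le p q \<longrightarrow> f p \<le> f q}"

lemma KP_eq_sum_order_preserving_maps:
  "KP Q le N x = (\<Sum>f\<in>order_preserving_maps Q le N. \<Prod>p\<in>Q. x (f p))"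
  unfolding KP_def order_preserving_maps_def ..

lemma finite_order_preserving_maps: "finite Q \<Longrightarrow> finite (order_preserving_maps Q le N)"
  unfolding order_preserving_maps_def
  by (rule finite_subset[OF _ finite_PiE[of Q "\<lambda>_. {1..N}"]]) auto

lemma KP_no_vars: "finite Q \<Longrightarrow> KP Q le 0 x = (if Q = {} then 1 else 0)"
  by (auto simp: KP_eq_sum_order_preserving_maps order_preserving_maps_def PiE_empty_range)

definition extend_top :: "nat \<Rightarrow> 'a set \<times> ('a \<Rightarrow> nat) \<Rightarrow> 'a \<Rightarrow> nat" where
  "extend_top N = (\<lambda>(U, g) p. if p \<in> U then Suc N else g p)"

lemma inj_on_extend_top:
  "inj_on (extend_top N) (SIGMA U:upsets le Q. order_preserving_maps (Q - U) le N)"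
proof (rule inj_onI, clarsimp)
  fix U1 g1 U2 g2
  assume U1: "U1 \<in> upsets le Q" "g1 \<in> order_preserving_maps (Q - U1) le N"
    and U2: "U2 \<in> upsets le Q" "g2 \<in> order_preserving_maps (Q - U2) le N"
    and eq: "extend_top N (U1, g1) = extend_top N (U2, g2)"
  have g1: "g1 \<in> (Q - U1) \<rightarrow>\<^sub>E {1..N}" and g2: "g2 \<in> (Q - U2) \<rightarrow>\<^sub>E {1..N}"
    using U1 U2 by (auto simp: order_preserving_maps_def)
  have at: "(if p \<in> U1 then Suc N else g1 p) = (if p \<in> U2 then Suc N else g2 p)" for p
    using fun_cong[OF eq, of p] by (simp add: extend_top_def)
  have subset: "U \<subseteq> U'" if "U \<subseteq> Q" "g' \<in> (Q - U') \<rightarrow>\<^sub>E {1..N}"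
    and "\<And>p. (if p \<in> U then Suc N else g p) = (if p \<in> U' then Suc N else g' p)" for U U' g g'
  proof
    fix p assume "p \<in> U"
    show "p \<in> U'"
    proof (rule ccontr)
      assume "p \<notin> U'"
      then have "g' p = Suc N" "g' p \<in> {1..N}"
        using that(3)[of p] \<open>p \<in> U\<close> PiE_mem[OF that(2), of p] that(1) by auto
      then show False by simp
    qed
  qed
  have "U1 \<subseteq> Q" "U2 \<subseteq> Q" using U1 U2 by (auto simp: upsets_def is_upset_def)
  then have "U1 = U2" using subset at g1 g2 by (metis subset_antisym)
  moreover have "g1 p = g2 p" for p
    using at[of p] g1 g2 \<open>U1 = U2\<close> by (cases "p \<in> U2") (auto simp: PiE_def extensional_def)
  ultimately show "U1 = U2 \<and> g1 = g2" by auto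
qed

lemma order_preserving_maps_Suc:
  "order_preserving_maps Q le (Suc N) =
     extend_top N ` (SIGMA U:upsets le Q. order_preserving_maps (Q - U) le N)"
proof (intro equalityI subsetI)
  fix f assume f: "f \<in> order_preserving_maps Q le (Suc N)"
  have f_range: "f \<in> Q \<rightarrow>\<^sub>E {1..Suc N}" and f_mono: "\<forall>p\<in>Q. \<forall>q\<in>Q. plt le p q \<longrightarrow> f p \<le> f q"
    using f by (auto simp: order_preserving_maps_def)
  define U where "U = {p \<in> Q. f p = Suc N}"
  have "U \<in> upsets le Q"
    using f_mono f_range by (fastforce simp: upsets_def is_upset_def U_def)
  moreover have "restrict f (Q - U) \<in> order_preserving_maps (Q - U) le N"
    using f_range f_mono by (auto simp: order_preserving_maps_def U_def PiE_def Pi_def le_Suc_eq)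
  moreover have "f = extend_top N (U, restrict f (Q - U))"
    using f_range by (auto simp: extend_top_def U_def PiE_def extensional_def)
  ultimately show "f \<in> extend_top N ` (SIGMA U:upsets le Q. order_preserving_maps (Q - U) le N)"
    by blast
next
  fix f assume "f \<in> extend_top N ` (SIGMA U:upsets le Q. order_preserving_maps (Q - U) le N)"
  then obtain U g where U: "is_upset le Q U" and g: "g \<in> order_preserving_maps (Q - U) le N"
    and f: "f = extend_top N (U, g)"
    by (auto simp: upsets_def)
  have g_range: "g \<in> (Q - U) \<rightarrow>\<^sub>E {1..N}"
    and g_mono: "\<forall>p\<in>Q - U. \<forall>q\<in>Q - U. plt le p q \<longrightarrow> g p \<le> g q"
    using g by (auto simp: order_preserving_maps_def)
  have "f \<in> Q \<rightarrow>\<^sub>E {1..Suc N}"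
    using g_range U by (auto simp: f extend_top_def PiE_def Pi_def extensional_def is_upset_def)
  moreover have "f p \<le> f q" if "p \<in> Q" "q \<in> Q" "plt le p q" for p q
    using that g_mono g_range U
    by (cases "p \<in> U"; cases "q \<in> U") (auto simp: f extend_top_def is_upset_def le_Suc_eq)
  ultimately show "f \<in> order_preserving_maps Q le (Suc N)"
    by (simp add: order_preserving_maps_def)
qed

lemma KP_Suc_vars:
  assumes fin: "finite Q"
  shows "KP Q le (Suc N) x = (\<Sum>U\<in>upsets le Q. x (Suc N) ^ card U * KP (Q - U) le N x)"
proof -
  let ?S = "SIGMA U:upsets le Q. order_preserving_maps (Q - U) le N"
  have prod_extend_top:
    "(\<Prod>p\<in>Q. x (extend_top N (U, g) p)) = x (Suc N) ^ card U * (\<Prod>p\<in>Q - U. x (g p))"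
    if "U \<in> upsets le Q" for U g
  proof -
    have "U \<subseteq> Q" using that by (simp add: upsets_def is_upset_def)
    then have "(\<Prod>p\<in>Q. x (extend_top N (U, g) p)) =
        (\<Prod>p\<in>Q - U. x (extend_top N (U, g) p)) * (\<Prod>p\<in>U. x (extend_top N (U, g) p))"
      by (rule prod.subset_diff[OF _ fin])
    moreover have "(\<Prod>p\<in>Q - U. x (extend_top N (U, g) p)) = (\<Prod>p\<in>Q - U. x (g p))"
      by (rule prod.cong) (auto simp: extend_top_def)
    ultimately show ?thesis by (simp add: extend_top_def mult.commute)
  qed
  have "KP Q le (Suc N) x = (\<Sum>(U, g)\<in>?S. \<Prod>p\<in>Q. x (extend_top N (U, g) p))"
    unfolding KP_eq_sum_order_preserving_maps order_preserving_maps_Suc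
    by (subst sum.reindex[OF inj_on_extend_top]) (simp add: comp_def case_prod_beta')
  also have "\<dots> = (\<Sum>U\<in>upsets le Q. \<Sum>g\<in>order_preserving_maps (Q - U) le N.
      \<Prod>p\<in>Q. x (extend_top N (U, g) p))"
    by (rule sum.Sigma[symmetric]) (auto simp: finite_upsets fin finite_order_preserving_maps)
  also have "\<dots> = (\<Sum>U\<in>upsets le Q. x (Suc N) ^ card U * KP (Q - U) le N x)"
    by (simp add: prod_extend_top KP_eq_sum_order_preserving_maps sum_distrib_left)
  finally show ?thesis .
qed

section \<open>Decompositions of linear extensions into admissible blocks\<close>

definition is_linext_list :: "('a \<Rightarrow> 'a \<Rightarrow> bool) \<Rightarrow> 'a set \<Rightarrow> 'a list \<Rightarrow> bool" where
  "is_linext_list le Q xs \<longleftrightarrow> distinct xs \<and> set xs = Q \<and> sorted_wrt (\<lambda>a b. \<not> plt le b a) xs"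

definition unimodal_list :: "nat list \<Rightarrow> bool" where
  "unimodal_list ys \<longleftrightarrow> (\<exists>k<length ys. (\<forall>j<k. ys ! j > ys ! Suc j) \<and>
      (\<forall>j. k \<le> j \<and> Suc j < length ys \<longrightarrow> ys ! j < ys ! Suc j))"

definition admissible_block :: "('a \<Rightarrow> 'a \<Rightarrow> bool) \<Rightarrow> ('a \<Rightarrow> nat) \<Rightarrow> 'a list \<Rightarrow> bool" where
  "admissible_block le w b \<longleftrightarrow> b \<noteq> [] \<and> unimodal_list (map w b) \<and> unique_minimal le (set b)"

definition is_block_decomp :: "('a \<Rightarrow> 'a \<Rightarrow> bool) \<Rightarrow> ('a \<Rightarrow> nat) \<Rightarrow> 'a set \<Rightarrow> 'a list list \<Rightarrow> bool" where
  "is_block_decomp le w Q bl \<longleftrightarrow>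
     is_linext_list le Q (concat bl) \<and> (\<forall>b\<in>set bl. admissible_block le w b)"

definition block_decomps :: "('a \<Rightarrow> 'a \<Rightarrow> bool) \<Rightarrow> ('a \<Rightarrow> nat) \<Rightarrow> 'a set \<Rightarrow> 'a list list set" where
  "block_decomps le w Q = {bl. is_block_decomp le w Q bl}"

lemma is_linext_list_append:
  "is_linext_list le Q (xs @ ys) \<longleftrightarrow>
     is_upset le Q (set ys) \<and> is_linext_list le (set ys) ys \<and> is_linext_list le (Q - set ys) xs"
  unfolding is_linext_list_def is_upset_def sorted_wrt_append by auto

lemma is_block_decomp_append:
  "is_block_decomp le w Q (bl1 @ bl2) \<longleftrightarrow>
     is_upset le Q (set (concat bl2)) \<and> is_block_decomp le w (set (concat bl2)) bl2 \<and>
     is_block_decomp le w (Q - set (concat bl2)) bl1"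
  unfolding is_block_decomp_def concat_append is_linext_list_append by auto

lemma is_block_decomp_Nil_iff: "is_block_decomp le w Q [] \<longleftrightarrow> Q = {}"
  by (auto simp: is_block_decomp_def is_linext_list_def)

lemma is_block_decomp_empty_iff: "is_block_decomp le w {} bl \<longleftrightarrow> bl = []"
  by (cases bl) (auto simp: is_block_decomp_def is_linext_list_def admissible_block_def)

lemma is_block_decomp_lengths_pos: "is_block_decomp le w Q bl \<Longrightarrow> 0 \<notin> set (map length bl)"
  by (auto simp: is_block_decomp_def admissible_block_def)

lemma sum_list_lengths_block_decomp:
  "is_block_decomp le w Q bl \<Longrightarrow> sum_list (map length bl) = card Q"
  unfolding is_block_decomp_def is_linext_list_def by (metis distinct_card length_concat)

lemma finite_block_decomps:
  assumes "finite Q"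
  shows "finite (block_decomps le w Q)"
proof -
  let ?B = "{b. set b \<subseteq> Q \<and> length b \<le> card Q}"
  have "block_decomps le w Q \<subseteq> {bl. set bl \<subseteq> ?B \<and> length bl \<le> card Q}"
  proof (clarify)
    fix bl assume "bl \<in> block_decomps le w Q"
    then have bl: "is_block_decomp le w Q bl" by (simp add: block_decomps_def)
    have "length b \<le> card Q" if "b \<in> set bl" for b
      using member_le_sum_list[of "length b" "map length bl"] that
        sum_list_lengths_block_decomp[OF bl]
      by simp
    moreover have "length bl \<le> card Q"
      using length_le_sum_list[OF is_block_decomp_lengths_pos[OF bl]]
        sum_list_lengths_block_decomp[OF bl]
      by simp
    moreover have "set b \<subseteq> Q" if "b \<in> set bl" for b
      using bl that by (auto simp: is_block_decomp_def is_linext_list_def)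
    ultimately show "set bl \<subseteq> ?B \<and> length bl \<le> card Q" by auto
  qed
  moreover have "finite ?B" using finite_lists_length_le[OF assms] by simp
  then have "finite {bl. set bl \<subseteq> ?B \<and> length bl \<le> card Q}" by (rule finite_lists_length_le)
  ultimately show ?thesis by (rule finite_subset)
qed

lemma bij_betw_take_drop:
  "bij_betw (\<lambda>(xs, m). (take m xs, drop m xs)) (SIGMA xs:A. {..<length xs})
     {(ys, zs). ys @ zs \<in> A \<and> zs \<noteq> []}"
  by (rule bij_betw_byWitness[where f' = "\<lambda>(ys, zs). (ys @ zs, length ys)"]) auto

text \<open>Cutting a block decomposition of \<open>Q\<close> leaves a decomposition of an upset \<open>U\<close>,
  which is recovered from its blocks.\<close>

lemma bij_betw_split_at_upset:
  "bij_betw (\<lambda>(U, bl2, bl1). (bl1, bl2))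
     (SIGMA U:upsets le Q - {{}}. block_decomps le w U \<times> block_decomps le w (Q - U))
     {(bl1, bl2). bl1 @ bl2 \<in> block_decomps le w Q \<and> bl2 \<noteq> []}"
proof -
  have U_eq: "set (concat bl2) = U" if "bl2 \<in> block_decomps le w U" for U bl2
    using that by (simp add: block_decomps_def is_block_decomp_def is_linext_list_def)
  show ?thesis
  proof (rule bij_betw_byWitness[where f' = "\<lambda>(bl1, bl2). (set (concat bl2), bl2, bl1)"],
      goal_cases)
    case 1
    show ?case using U_eq by auto
  next
    case 2
    show ?case by auto
  next
    case 3
    show ?case
      using U_eq
      by (auto simp: block_decomps_def is_block_decomp_append is_block_decomp_Nil_iff upsets_def)
  next
    case 4
    show ?case
      by (auto simp: block_decomps_def is_block_decomp_append is_block_decomp_empty_iff upsets_def)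
  qed
qed

lemma sum_block_decomps_splits:
  fixes F :: "'a list list \<Rightarrow> 'a list list \<Rightarrow> 'b :: comm_monoid_add"
  assumes fin: "finite Q"
  shows "(\<Sum>bl\<in>block_decomps le w Q. \<Sum>m<length bl. F (take m bl) (drop m bl)) =
         (\<Sum>U\<in>upsets le Q - {{}}. \<Sum>bl2\<in>block_decomps le w U.
            \<Sum>bl1\<in>block_decomps le w (Q - U). F bl1 bl2)"
proof -
  let ?S = "{(bl1, bl2). bl1 @ bl2 \<in> block_decomps le w Q \<and> bl2 \<noteq> []}"
  have fin_pairs: "finite (block_decomps le w U \<times> block_decomps le w (Q - U))"
    if "U \<in> upsets le Q" for U
    using that fin finite_subset[of U Q]
    by (auto simp: upsets_def is_upset_def intro: finite_block_decomps)
  have "(\<Sum>bl\<in>block_decomps le w Q. \<Sum>m<length bl. F (take m bl) (drop m bl)) =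
      (\<Sum>(bl, m)\<in>(SIGMA bl:block_decomps le w Q. {..<length bl}). F (take m bl) (drop m bl))"
    by (rule sum.Sigma) (auto simp: fin finite_block_decomps)
  also have "\<dots> = (\<Sum>p\<in>(SIGMA bl:block_decomps le w Q. {..<length bl}).
      case_prod F ((\<lambda>(xs, m). (take m xs, drop m xs)) p))"
    by (rule sum.cong) auto
  also have "\<dots> = (\<Sum>(bl1, bl2)\<in>?S. F bl1 bl2)"
    by (rule sum.reindex_bij_betw[OF bij_betw_take_drop])
  also have "\<dots> = (\<Sum>p\<in>(SIGMA U:upsets le Q - {{}}.
      block_decomps le w U \<times> block_decomps le w (Q - U)).
      case_prod F ((\<lambda>(U, bl2, bl1). (bl1, bl2)) p))"
    by (rule sum.reindex_bij_betw[OF bij_betw_split_at_upset, symmetric])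
  also have "\<dots> = (\<Sum>(U, bl2, bl1)\<in>(SIGMA U:upsets le Q - {{}}.
      block_decomps le w U \<times> block_decomps le w (Q - U)). F bl1 bl2)"
    by (rule sum.cong) auto
  also have "\<dots> = (\<Sum>U\<in>upsets le Q - {{}}.
      \<Sum>(bl2, bl1)\<in>block_decomps le w U \<times> block_decomps le w (Q - U). F bl1 bl2)"
    by (rule sum.Sigma[symmetric]) (auto simp: fin finite_upsets fin_pairs)
  finally show ?thesis by (simp only: sum.cartesian_product)
qed

lemma unimodal_list_sorted_if_rises_first:
  assumes "unimodal_list ys" and "1 < length ys \<Longrightarrow> ys ! 0 < ys ! 1"
  shows "sorted_wrt (<) ys"
proof -
  obtain k where k: "k < length ys" "\<forall>j<k. ys ! j > ys ! Suc j"
    "\<forall>j. k \<le> j \<and> Suc j < length ys \<longrightarrow> ys ! j < ys ! Suc j"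
    using assms(1) by (auto simp: unimodal_list_def)
  have "k = 0"
  proof (rule ccontr)
    assume "k \<noteq> 0"
    then have "ys ! 0 > ys ! 1" "1 < length ys" using k by auto
    then show False using assms(2) by simp
  qed
  then show ?thesis using k(3) by (subst sorted_wrt_iff_nth_Suc_transp) (auto simp: transp_def)
qed

definition last_blocks :: "('a \<Rightarrow> 'a \<Rightarrow> bool) \<Rightarrow> ('a \<Rightarrow> nat) \<Rightarrow> 'a set \<Rightarrow> 'a list set" where
  "last_blocks le w Q = {b. is_upset le Q (set b) \<and> is_block_decomp le w (set b) [b]}"

lemma block_decomps_eq_snoc_image:
  assumes "Q \<noteq> {}"
  shows "block_decomps le w Q =
           (\<lambda>(b, bl). bl @ [b]) ` (SIGMA b:last_blocks le w Q. block_decomps le w (Q - set b))"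
proof (intro equalityI subsetI)
  fix bl assume "bl \<in> block_decomps le w Q"
  then have bl: "is_block_decomp le w Q bl" by (simp add: block_decomps_def)
  then obtain bl1 b where bl_eq: "bl = bl1 @ [b]"
    using assms is_block_decomp_Nil_iff by (metis rev_exhaust)
  then show
    "bl \<in> (\<lambda>(b, bl). bl @ [b]) ` (SIGMA b:last_blocks le w Q. block_decomps le w (Q - set b))"
    using bl is_block_decomp_append[of le w Q bl1 "[b]"]
    by (auto simp: last_blocks_def block_decomps_def)
qed (auto simp: last_blocks_def block_decomps_def is_block_decomp_append)

lemma pi1_lengths_snoc_last_block:
  assumes "b \<in> last_blocks le w Q" and "bl \<in> block_decomps le w (Q - set b)"
  shows "pi1 (map length (bl @ [b])) = pi1 (map length bl) * card Q"
proof -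
  have "is_block_decomp le w Q (bl @ [b])"
    using assms by (simp add: last_blocks_def block_decomps_def is_block_decomp_append)
  then have "sum_list (map length (bl @ [b])) = card Q"
    by (rule sum_list_lengths_block_decomp)
  then show ?thesis using pi1_snoc[of "map length bl" "length b"] by simp
qed

lemma sum_block_decomps_Psi_over_z_Suc_vars:
  assumes fin: "finite Q"
  shows "(\<Sum>bl\<in>block_decomps le w Q. Psi_over_z (Suc N) (map length bl) x) =
    (\<Sum>bl\<in>block_decomps le w Q. Psi_over_z N (map length bl) x) +
    (\<Sum>U\<in>upsets le Q - {{}}. x (Suc N) ^ card U *
       (\<Sum>bl2\<in>block_decomps le w U. 1 / real (pi1 (map length bl2))) *
       (\<Sum>bl1\<in>block_decomps le w (Q - U). Psi_over_z N (map length bl1) x))"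
proof -
  define F :: "'a list list \<Rightarrow> 'a list list \<Rightarrow> real"
    where "F bl1 bl2 = x (Suc N) ^ length (concat bl2) / real (pi1 (map length bl2)) *
      Psi_over_z N (map length bl1) x" for bl1 bl2
  have "Psi_over_z (Suc N) (map length bl) x =
      Psi_over_z N (map length bl) x + (\<Sum>m<length bl. F (take m bl) (drop m bl))"
    if "bl \<in> block_decomps le w Q" for bl
    using Psi_over_z_Suc_vars[OF is_block_decomp_lengths_pos, of le w Q bl N x] that
    by (simp add: F_def block_decomps_def drop_map take_map length_concat)
  then have "(\<Sum>bl\<in>block_decomps le w Q. Psi_over_z (Suc N) (map length bl) x) =
      (\<Sum>bl\<in>block_decomps le w Q. Psi_over_z N (map length bl) x) +
      (\<Sum>U\<in>upsets le Q - {{}}. \<Sum>bl2\<in>block_decomps le w U.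
         \<Sum>bl1\<in>block_decomps le w (Q - U). F bl1 bl2)"
    by (simp add: sum.distrib sum_block_decomps_splits[OF fin])
  moreover have "length (concat bl2) = card U" if "bl2 \<in> block_decomps le w U" for U bl2
    using that sum_list_lengths_block_decomp by (fastforce simp: block_decomps_def length_concat)
  ultimately show ?thesis
    by (simp add: F_def sum_distrib_left sum_distrib_right mult_ac cong: sum.cong)
qed

locale naturally_labeled_poset =
  fixes P :: "'a set" and le :: "'a \<Rightarrow> 'a \<Rightarrow> bool" and w :: "'a \<Rightarrow> nat"
  assumes poset: "is_poset P le" and inj_w: "inj_on w P" and natural: "naturally_labeled P le w"
begin

lemma finite_P: "finite P"
  using poset unfolding is_poset_def by blast

lemma P_refl: "x \<in> P \<Longrightarrow> le x x"
  using poset unfolding is_poset_def by blast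

lemma P_antisym: "x \<in> P \<Longrightarrow> y \<in> P \<Longrightarrow> le x y \<Longrightarrow> le y x \<Longrightarrow> x = y"
  using poset unfolding is_poset_def by blast

lemma P_trans: "x \<in> P \<Longrightarrow> y \<in> P \<Longrightarrow> z \<in> P \<Longrightarrow> le x y \<Longrightarrow> le y z \<Longrightarrow> le x z"
  using poset unfolding is_poset_def by blast

lemma w_strict_mono: "x \<in> P \<Longrightarrow> y \<in> P \<Longrightarrow> plt le x y \<Longrightarrow> w x < w y"
  using natural unfolding naturally_labeled_def by blast

text \<open>The labelling gives an easy way to find minimal elements: minimize \<open>w\<close>.\<close>

lemma exists_minimal_below:
  assumes "S \<subseteq> P" and "y \<in> S"
  shows "\<exists>z\<in>S. le z y \<and> (\<forall>q\<in>S. \<not> plt le q z)"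
proof -
  let ?T = "{z\<in>S. le z y}"
  have fin: "finite (w ` ?T)" using finite_subset[OF assms(1) finite_P] by simp
  moreover have "y \<in> ?T" using assms P_refl by auto
  ultimately have "Min (w ` ?T) \<in> w ` ?T" by (intro Min_in) auto
  then obtain z where z: "z \<in> ?T" "w z = Min (w ` ?T)" by auto
  then have z_min: "w z \<le> w t" if "t \<in> ?T" for t using fin that by simp
  have "\<not> plt le q z" if "q \<in> S" for q
  proof
    assume "plt le q z"
    then have "q \<in> ?T" using z(1) that assms P_trans[of q z y] by (auto simp: plt_def)
    then show False using z_min w_strict_mono[OF _ _ \<open>plt le q z\<close>] that z(1) assms(1) by fastforce
  qed
  then show ?thesis using z(1) by auto
qed

definition principal_upset :: "'a set \<Rightarrow> 'a \<Rightarrow> 'a set" where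
  "principal_upset Q u = {y\<in>Q. le u y}"

definition principal_block :: "'a set \<Rightarrow> 'a \<Rightarrow> 'a list" where
  "principal_block Q u = map (inv_into P w) (sorted_list_of_set (w ` principal_upset Q u))"

lemma
  assumes "Q \<subseteq> P"
  shows set_principal_block: "set (principal_block Q u) = principal_upset Q u"
    and map_w_principal_block:
      "map w (principal_block Q u) = sorted_list_of_set (w ` principal_upset Q u)"
    and distinct_principal_block: "distinct (principal_block Q u)"
proof -
  have sub: "principal_upset Q u \<subseteq> P" using assms by (auto simp: principal_upset_def)
  then have fin: "finite (w ` principal_upset Q u)" using finite_subset[OF _ finite_P] by blast
  show "set (principal_block Q u) = principal_upset Q u"
    using fin inj_w sub by (simp add: principal_block_def)
  show map_w: "map w (principal_block Q u) = sorted_list_of_set (w ` principal_upset Q u)"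
    using fin sub unfolding principal_block_def map_map
    by (intro map_idI) (auto intro: f_inv_into_f)
  show "distinct (principal_block Q u)"
    using distinct_map[of w] map_w by (metis distinct_sorted_list_of_set)
qed

lemma principal_block_in_last_blocks:
  assumes Q: "Q \<subseteq> P" and u: "u \<in> Q"
  shows "principal_block Q u \<in> last_blocks le w Q"
proof -
  let ?b = "principal_block Q u" and ?U = "principal_upset Q u"
  have set_b: "set ?b = ?U" and sorted: "sorted_wrt (<) (map w ?b)" and distinct: "distinct ?b"
    using set_principal_block[OF Q] map_w_principal_block[OF Q] distinct_principal_block[OF Q]
    by auto
  have U_sub: "?U \<subseteq> P" using Q by (auto simp: principal_upset_def)
  have u_in: "u \<in> ?U" using u Q P_refl by (auto simp: principal_upset_def)
  have "is_upset le Q ?U"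
    using Q u P_trans by (auto simp: is_upset_def principal_upset_def plt_def) blast
  moreover have "unimodal_list (map w ?b)"
    using sorted u_in set_b unfolding unimodal_list_def
    by (intro exI[of _ 0]) (auto simp: sorted_wrt_iff_nth_less)
  moreover have "unique_minimal le ?U"
    unfolding unique_minimal_def using u_in Q u P_antisym
    by (intro ex1I[of _ u]) (auto simp: principal_upset_def plt_def)
  moreover have "sorted_wrt (\<lambda>a b. \<not> plt le b a) ?b"
    using sorted set_b U_sub w_strict_mono unfolding sorted_wrt_map
    by (fastforce elim: sorted_wrt_mono_rel[rotated])
  ultimately show ?thesis
    using set_b distinct u_in
    by (auto simp: last_blocks_def is_block_decomp_def is_linext_list_def admissible_block_def)
qed

lemma upset_eq_principal_upset:
  assumes Q: "Q \<subseteq> P" and U: "is_upset le Q U" and "unique_minimal le U"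
    and m: "m \<in> U" "\<forall>q\<in>U. \<not> plt le q m"
  shows "U = principal_upset Q m"
proof (intro equalityI subsetI)
  have U_sub: "U \<subseteq> Q" using U by (simp add: is_upset_def)
  fix y assume "y \<in> U"
  then obtain z where "z \<in> U" "le z y" "\<forall>q\<in>U. \<not> plt le q z"
    using exists_minimal_below[of U y] U_sub Q by blast
  moreover have "z = m"
    using \<open>unique_minimal le U\<close> m calculation(1,3) unfolding unique_minimal_def by blast
  ultimately show "y \<in> principal_upset Q m" using \<open>y \<in> U\<close> U_sub by (auto simp: principal_upset_def)
next
  fix y assume "y \<in> principal_upset Q m"
  then show "y \<in> U"
    using U m(1) by (cases "y = m") (auto simp: principal_upset_def is_upset_def plt_def)
qed

lemma last_block_eq_principal_block:
  assumes Q: "Q \<subseteq> P" and b: "b \<in> last_blocks le w Q"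
  shows "\<exists>u\<in>Q. b = principal_block Q u"
proof -
  have upset: "is_upset le Q (set b)" and distinct: "distinct b"
    and sorted: "sorted_wrt (\<lambda>a b. \<not> plt le b a) b" and "b \<noteq> []"
    and unimodal: "unimodal_list (map w b)" and unique: "unique_minimal le (set b)"
    using b
    by (auto simp: last_blocks_def is_block_decomp_def is_linext_list_def admissible_block_def)
  let ?m = "b ! 0"
  have b_sub: "set b \<subseteq> Q" and b_sub_P: "set b \<subseteq> P" using upset Q by (auto simp: is_upset_def)
  have m_in: "?m \<in> set b" using \<open>b \<noteq> []\<close> by simp
  have first_minimal: "\<forall>q\<in>set b. \<not> plt le q ?m"
    using sorted distinct by (auto simp: in_set_conv_nth sorted_wrt_iff_nth_less plt_def)
      (metis gr0I nth_eq_iff_index_eq)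
  then have set_b: "set b = principal_upset Q ?m"
    using upset_eq_principal_upset[OF Q upset unique m_in] by blast
  have "sorted_wrt (<) (map w b)"
  proof (rule unimodal_list_sorted_if_rises_first[OF unimodal])
    assume "1 < length (map w b)"
    then have len: "1 < length b" by simp
    then have "b ! 1 \<noteq> ?m" using nth_eq_iff_index_eq[OF distinct, of 1 0] \<open>b \<noteq> []\<close> by simp
    moreover have "b ! 1 \<in> principal_upset Q ?m" using set_b len nth_mem by blast
    ultimately have "plt le ?m (b ! 1)" by (simp add: principal_upset_def plt_def)
    moreover have "?m \<in> P" "b ! 1 \<in> P" using b_sub_P m_in nth_mem[OF len] by auto
    ultimately have "w ?m < w (b ! 1)" using w_strict_mono by blast
    then show "map w b ! 0 < map w b ! 1" using len \<open>b \<noteq> []\<close> by simp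
  qed
  then have "map w b = sorted_list_of_set (w ` principal_upset Q ?m)"
    using set_b finite_set[of b] by (intro strict_sorted_equal) auto
  then have "map w b = map w (principal_block Q ?m)" by (simp add: map_w_principal_block[OF Q])
  moreover have "inj_on w (set b \<union> set (principal_block Q ?m))"
    using inj_w b_sub_P set_principal_block[OF Q] set_b by (auto intro: inj_on_subset)
  ultimately show ?thesis using m_in b_sub map_inj_on by blast
qed

lemma last_blocks_eq_image: "Q \<subseteq> P \<Longrightarrow> last_blocks le w Q = principal_block Q ` Q"
  using principal_block_in_last_blocks last_block_eq_principal_block by blast

lemma card_last_blocks:
  assumes Q: "Q \<subseteq> P"
  shows "card (last_blocks le w Q) = card Q"
proof -
  have "inj_on (principal_block Q) Q"
  proof (rule inj_onI)
    fix u v assume "u \<in> Q" "v \<in> Q" "principal_block Q u = principal_block Q v"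
    then have "principal_upset Q u = principal_upset Q v" by (metis set_principal_block[OF Q])
    then show "u = v"
      using \<open>u \<in> Q\<close> \<open>v \<in> Q\<close> Q P_refl P_antisym by (auto simp: principal_upset_def set_eq_iff) blast
  qed
  then show ?thesis by (simp add: last_blocks_eq_image[OF Q] card_image)
qed

lemma sum_inverse_pi1_block_decomps:
  "Q \<subseteq> P \<Longrightarrow> (\<Sum>bl\<in>block_decomps le w Q. 1 / real (pi1 (map length bl))) = 1"
proof (induction "card Q" arbitrary: Q rule: less_induct)
  case less
  have fin: "finite Q" using less.prems finite_subset finite_P by blast
  show ?case
  proof (cases "Q = {}")
    case True
    then have "block_decomps le w Q = {[]}"
      by (auto simp: block_decomps_def is_block_decomp_empty_iff)
    then show ?thesis by (simp add: pi1_def)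
  next
    case False
    let ?F = "\<lambda>bl. 1 / real (pi1 (map length bl))"
    let ?S = "SIGMA b:last_blocks le w Q. block_decomps le w (Q - set b)"
    have inj: "inj_on (\<lambda>(b, bl). bl @ [b]) ?S" by (rule inj_onI) auto
    have last_block: "(\<Sum>bl\<in>block_decomps le w (Q - set b). ?F (bl @ [b])) = 1 / real (card Q)"
      if b: "b \<in> last_blocks le w Q" for b
    proof -
      have "set b \<subseteq> Q" "b \<noteq> []"
        using b
        by (auto simp: last_blocks_def is_upset_def is_block_decomp_def admissible_block_def)
      then have smaller: "card (Q - set b) < card Q"
        using fin by (intro psubset_card_mono) (auto simp: neq_Nil_conv)
      have "(\<Sum>bl\<in>block_decomps le w (Q - set b). ?F (bl @ [b])) =
          (\<Sum>bl\<in>block_decomps le w (Q - set b). ?F bl) / real (card Q)"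
        by (simp add: pi1_lengths_snoc_last_block[OF b] sum_divide_distrib del: map_append)
      then show ?thesis using less.hyps[OF smaller] less.prems by auto
    qed
    have "(\<Sum>bl\<in>block_decomps le w Q. ?F bl) = (\<Sum>(b, bl)\<in>?S. ?F (bl @ [b]))"
      unfolding block_decomps_eq_snoc_image[OF False]
      by (subst sum.reindex[OF inj]) (simp add: comp_def split_beta)
    also have "\<dots> = (\<Sum>b\<in>last_blocks le w Q. \<Sum>bl\<in>block_decomps le w (Q - set b). ?F (bl @ [b]))"
      using fin less.prems
      by (intro sum.Sigma[symmetric]) (auto simp: last_blocks_eq_image finite_block_decomps)
    also have "\<dots> = 1"
      using last_block card_last_blocks[OF less.prems] fin False by simp
    finally show ?thesis .
  qed
qed

lemma KP_eq_sum_block_decomps: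
  "Q \<subseteq> P \<Longrightarrow> KP Q le N x = (\<Sum>bl\<in>block_decomps le w Q. Psi_over_z N (map length bl) x)"
proof (induction N arbitrary: Q)
  case 0
  have fin: "finite Q" using 0 finite_subset finite_P by blast
  have "(\<Sum>bl\<in>block_decomps le w Q. Psi_over_z 0 (map length bl) x) =
      (\<Sum>bl\<in>block_decomps le w Q. if bl = [] then 1 else 0)"
    by (intro sum.cong refl)
       (simp add: Psi_over_z_no_vars block_decomps_def is_block_decomp_lengths_pos del: set_map)
  also have "\<dots> = (if [] \<in> block_decomps le w Q then 1 else 0)"
    by (rule sum.delta[OF finite_block_decomps[OF fin]])
  finally show ?case by (simp add: KP_no_vars fin block_decomps_def is_block_decomp_Nil_iff)
next
  case (Suc N)
  have fin: "finite Q" using Suc.prems finite_subset finite_P by blast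
  have "(\<Sum>bl2\<in>block_decomps le w U. 1 / real (pi1 (map length bl2))) = 1"
    and "(\<Sum>bl1\<in>block_decomps le w (Q - U). Psi_over_z N (map length bl1) x) = KP (Q - U) le N x"
    if "U \<in> upsets le Q" for U
  proof -
    have "U \<subseteq> P" "Q - U \<subseteq> P" using that Suc.prems by (auto simp: upsets_def is_upset_def)
    then show "(\<Sum>bl2\<in>block_decomps le w U. 1 / real (pi1 (map length bl2))) = 1"
      and "(\<Sum>bl1\<in>block_decomps le w (Q - U). Psi_over_z N (map length bl1) x) = KP (Q - U) le N x"
      using sum_inverse_pi1_block_decomps Suc.IH by simp_all
  qed
  then have "(\<Sum>bl\<in>block_decomps le w Q. Psi_over_z (Suc N) (map length bl) x) =
      KP Q le N x + (\<Sum>U\<in>upsets le Q - {{}}. x (Suc N) ^ card U * KP (Q - U) le N x)"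
    by (simp add: sum_block_decomps_Psi_over_z_Suc_vars[OF fin] Suc.IH[OF Suc.prems])
  also have "\<dots> = KP Q le (Suc N) x"
    using sum.remove[OF finite_upsets[OF fin] empty_in_upsets,
        of "\<lambda>U. x (Suc N) ^ card U * KP (Q - U) le N x"]
    by (simp add: KP_Suc_vars[OF fin])
  finally show ?case ..
qed

end

section \<open>From block decompositions to permutations\<close>

fun chop :: "nat list \<Rightarrow> 'a list \<Rightarrow> 'a list list" where
  "chop [] xs = []"
| "chop (a # \<alpha>) xs = take a xs # chop \<alpha> (drop a xs)"

lemma length_chop[simp]: "length (chop \<alpha> xs) = length \<alpha>"
  by (induction \<alpha> arbitrary: xs) auto

lemma concat_chop: "sum_list \<alpha> = length xs \<Longrightarrow> concat (chop \<alpha> xs) = xs"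
  by (induction \<alpha> arbitrary: xs) auto

lemma map_length_chop: "sum_list \<alpha> = length xs \<Longrightarrow> map length (chop \<alpha> xs) = \<alpha>"
  by (induction \<alpha> arbitrary: xs) (auto simp: min_def)

lemma chop_concat: "map length bl = \<alpha> \<Longrightarrow> chop \<alpha> (concat bl) = bl"
  by (induction bl arbitrary: \<alpha>) auto

lemma nth_chop:
  "i < length \<alpha> \<Longrightarrow> chop \<alpha> xs ! i = take (\<alpha> ! i) (drop (sum_list (take i \<alpha>)) xs)"
proof (induction \<alpha> arbitrary: xs i)
  case (Cons a \<alpha>)
  then show ?case by (cases i) (simp_all add: add.commute)
qed simp

lemma ball_set_chop_iff:
  "(\<forall>b\<in>set (chop \<alpha> xs). Q b) \<longleftrightarrow> (\<forall>i<length \<alpha>. Q (chop \<alpha> xs ! i))"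
  by (simp add: all_set_conv_all_nth)

lemma ball_atLeastAtMost_1_iff: "(\<forall>i\<in>{1..m}. Q i) \<longleftrightarrow> (\<forall>i<m. Q (Suc i))"
  unfolding image_Suc_lessThan[symmetric] by (simp add: lessThan_def)

lemma unimodal_on_interval_iff:
  assumes len: "length ys = L" and ys: "\<And>t. t < L \<Longrightarrow> ys ! t = g (s + 1 + t)"
  shows "unimodal_on g {s + 1..s + L} \<longleftrightarrow> unimodal_list ys"
proof
  assume "unimodal_on g {s + 1..s + L}"
  then obtain k where k: "k \<in> {s + 1..s + L}"
    "\<forall>j. j \<in> {s + 1..s + L} \<and> j < k \<longrightarrow> g j > g (Suc j)"
    "\<forall>j. j \<in> {s + 1..s + L} \<and> Suc j \<in> {s + 1..s + L} \<and> k \<le> j \<longrightarrow> g j < g (Suc j)"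
    unfolding unimodal_on_def by blast
  show "unimodal_list ys" unfolding unimodal_list_def
  proof (rule exI[of _ "k - (s + 1)"], intro conjI allI impI)
    show "k - (s + 1) < length ys" using k(1) len by auto
    fix j assume j: "j < k - (s + 1)"
    then have "Suc j \<le> L" "Suc (s + j) < k" using k(1) by auto
    then have "g (s + 1 + j) > g (Suc (s + 1 + j))" using k(2)[rule_format, of "s + 1 + j"] by auto
    then show "ys ! j > ys ! Suc j" using ys[of j] ys[of "Suc j"] j k(1) by auto
  next
    fix j assume j: "k - (s + 1) \<le> j \<and> Suc j < length ys"
    then have "g (s + 1 + j) < g (Suc (s + 1 + j))"
      using k(1) k(3)[rule_format, of "s + 1 + j"] len by auto
    then show "ys ! j < ys ! Suc j" using ys[of j] ys[of "Suc j"] j len by auto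
  qed
next
  assume "unimodal_list ys"
  then obtain k where k: "k < L" "\<forall>j<k. ys ! j > ys ! Suc j"
    "\<forall>j. k \<le> j \<and> Suc j < L \<longrightarrow> ys ! j < ys ! Suc j"
    unfolding unimodal_list_def len by blast
  show "unimodal_on g {s + 1..s + L}" unfolding unimodal_on_def
  proof (rule bexI[of _ "s + 1 + k"], intro conjI allI impI)
    fix j assume j: "j \<in> {s + 1..s + L} \<and> j < s + 1 + k"
    then obtain t where t: "j = s + 1 + t" "t < k"
      by (metis add_less_cancel_left le_iff_add atLeastAtMost_iff)
    then show "g j > g (Suc j)" using k(1,2) ys[of t] ys[of "Suc t"] by auto
  next
    fix j assume j: "j \<in> {s + 1..s + L} \<and> Suc j \<in> {s + 1..s + L} \<and> s + 1 + k \<le> j"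
    then obtain t where t: "j = s + 1 + t" "k \<le> t"
      by (metis le_iff_add add.assoc add_le_cancel_left)
    then have "Suc t < L" using j by auto
    then show "g j < g (Suc j)" using k(3) t ys[of t] ys[of "Suc t"] by auto
  qed (use k(1) in auto)
qed

locale naturally_labeled_poset_onto = naturally_labeled_poset +
  fixes n :: nat
  assumes w_image: "w ` P = {1..n}"
begin

definition word_of_perm :: "(nat \<Rightarrow> nat) \<Rightarrow> 'a list" where
  "word_of_perm \<sigma> = map (\<lambda>j. inv_into P w (\<sigma> j)) [1..<n+1]"

definition perm_of_word :: "'a list \<Rightarrow> nat \<Rightarrow> nat" where
  "perm_of_word xs = (\<lambda>j. if j \<in> {1..n} then w (xs ! (j - 1)) else j)"

definition arrangements :: "'a list set" where
  "arrangements = {xs. distinct xs \<and> set xs = P}"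

lemma card_P: "card P = n"
  using card_image[OF inj_w] w_image by simp

lemma length_arrangement: "xs \<in> arrangements \<Longrightarrow> length xs = n"
  unfolding arrangements_def using card_P distinct_card by fastforce

lemma word_of_perm_in_arrangements:
  assumes "\<sigma> permutes {1..n}"
  shows "word_of_perm \<sigma> \<in> arrangements"
proof -
  have image: "\<sigma> ` {1..<n + 1} = {1..n}"
    using permutes_image[OF assms] by (simp add: atLeastLessThanSuc_atLeastAtMost)
  have "inj_on (inv_into P w \<circ> \<sigma>) {1..<n + 1}"
  proof (rule comp_inj_on)
    show "inj_on \<sigma> {1..<n + 1}" using permutes_inj[OF assms] by (rule inj_on_subset) simp
    show "inj_on (inv_into P w) (\<sigma> ` {1..<n + 1})"
      using inj_on_inv_into[of "{1..n}" w P] image w_image by simp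
  qed
  then have "distinct (word_of_perm \<sigma>)"
    by (simp add: word_of_perm_def distinct_map comp_def del: upt_Suc)
  moreover have "set (word_of_perm \<sigma>) = inv_into P w ` \<sigma> ` {1..<n + 1}"
    by (simp add: word_of_perm_def image_image del: upt_Suc)
  then have "set (word_of_perm \<sigma>) = inv_into P w ` w ` P" using image w_image by simp
  ultimately show ?thesis using inj_w by (simp add: arrangements_def)
qed

lemma perm_of_word_of_perm:
  assumes "\<sigma> permutes {1..n}"
  shows "perm_of_word (word_of_perm \<sigma>) = \<sigma>"
proof
  fix j show "perm_of_word (word_of_perm \<sigma>) j = \<sigma> j"
  proof (cases "j \<in> {1..n}")
    case True
    then have "\<sigma> j \<in> w ` P" using permutes_in_image[OF assms] w_image by simp
    moreover have "j - 1 < length [1..<n + 1]" "[1..<n + 1] ! (j - 1) = j"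
      using True by (auto simp del: upt_Suc)
    then have "word_of_perm \<sigma> ! (j - 1) = inv_into P w (\<sigma> j)"
      by (simp add: word_of_perm_def del: upt_Suc)
    ultimately show ?thesis using True by (simp add: perm_of_word_def f_inv_into_f)
  next
    case False
    then show ?thesis
      unfolding perm_of_word_def if_not_P[OF False] using permutes_not_in[OF assms False] by simp
  qed
qed

lemma perm_of_word_Suc: "t < n \<Longrightarrow> perm_of_word xs (Suc t) = w (xs ! t)"
  by (simp add: perm_of_word_def)

lemma perm_of_word_permutes:
  assumes xs: "xs \<in> arrangements"
  shows "perm_of_word xs permutes {1..n}"
proof (rule bij_imp_permutes)
  have len: "length xs = n" and distinct: "distinct xs" and set_xs: "set xs = P"
    using xs length_arrangement by (auto simp: arrangements_def)
  have into: "perm_of_word xs ` {1..n} \<subseteq> {1..n}"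
  proof
    fix y assume "y \<in> perm_of_word xs ` {1..n}"
    then obtain j where j: "j \<in> {1..n}" and y: "y = w (xs ! (j - 1))"
      by (auto simp: perm_of_word_def)
    have "xs ! (j - 1) \<in> P" using j len set_xs by auto
    then show "y \<in> {1..n}" using y w_image by blast
  qed
  have "inj_on (perm_of_word xs) {1..n}"
  proof (rule inj_onI)
    fix i j assume i: "i \<in> {1..n}" and j: "j \<in> {1..n}"
      and eq: "perm_of_word xs i = perm_of_word xs j"
    have "xs ! (i - 1) \<in> P" "xs ! (j - 1) \<in> P" using i j len set_xs by auto
    then have "xs ! (i - 1) = xs ! (j - 1)"
      using eq i j inj_onD[OF inj_w] by (simp add: perm_of_word_def)
    moreover have "i - 1 < length xs" "j - 1 < length xs" using i j len by auto
    ultimately have "i - 1 = j - 1" using nth_eq_iff_index_eq[OF distinct] by blast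
    then show "i = j" using i j by auto
  qed
  then show "bij_betw (perm_of_word xs) {1..n} {1..n}"
    using endo_inj_surj[OF finite_atLeastAtMost into] by (simp add: bij_betw_def)
  show "perm_of_word xs j = j" if "j \<notin> {1..n}" for j
    using that unfolding perm_of_word_def by (simp only: if_False)
qed

lemma word_of_perm_of_word:
  assumes xs: "xs \<in> arrangements"
  shows "word_of_perm (perm_of_word xs) = xs"
proof (rule nth_equalityI)
  have len: "length xs = n" using length_arrangement[OF xs] .
  then show "length (word_of_perm (perm_of_word xs)) = length xs"
    by (simp add: word_of_perm_def del: upt_Suc)
  fix t assume "t < length (word_of_perm (perm_of_word xs))"
  then have t: "t < n" by (simp add: word_of_perm_def del: upt_Suc)
  then have "xs ! t \<in> P" using xs len by (auto simp: arrangements_def)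
  then show "word_of_perm (perm_of_word xs) ! t = xs ! t"
    using t inv_into_f_f[OF inj_w] by (simp add: word_of_perm_def perm_of_word_def del: upt_Suc)
qed

lemma inv_perm_of_word:
  "xs \<in> arrangements \<Longrightarrow> t < n \<Longrightarrow> inv (perm_of_word xs) (w (xs ! t)) = Suc t"
  using permutes_inverses(2)[OF perm_of_word_permutes, of xs "Suc t"] perm_of_word_Suc[of t xs]
  by simp

lemma perm_of_word_in_linext_iff:
  assumes xs: "xs \<in> arrangements"
  shows "perm_of_word xs \<in> linext P le w n \<longleftrightarrow> is_linext_list le P xs"
proof -
  have len: "length xs = n" and set_xs: "set xs = P" and "distinct xs"
    using xs length_arrangement by (auto simp: arrangements_def)
  have "perm_of_word xs \<in> linext P le w n \<longleftrightarrow> (\<forall>i<n. \<forall>j<n. plt le (xs ! i) (xs ! j) \<longrightarrow> i < j)"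
    unfolding linext_def set_xs[symmetric] all_set_conv_all_nth len
    using perm_of_word_permutes[OF xs] inv_perm_of_word[OF xs] by auto
  also have "\<dots> \<longleftrightarrow> sorted_wrt (\<lambda>a b. \<not> plt le b a) xs"
    unfolding sorted_wrt_iff_nth_less len
  proof
    assume "\<forall>i<n. \<forall>j<n. plt le (xs ! i) (xs ! j) \<longrightarrow> i < j"
    then show "\<forall>i j. i < j \<longrightarrow> j < n \<longrightarrow> \<not> plt le (xs ! j) (xs ! i)"
      by (meson less_asym less_trans)
  next
    assume "\<forall>i j. i < j \<longrightarrow> j < n \<longrightarrow> \<not> plt le (xs ! j) (xs ! i)"
    then show "\<forall>i<n. \<forall>j<n. plt le (xs ! i) (xs ! j) \<longrightarrow> i < j"
      by (metis linorder_neqE_nat plt_def)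
  qed
  finally show ?thesis using set_xs \<open>distinct xs\<close> by (simp add: is_linext_list_def)
qed

lemma nth_chop_block:
  assumes xs: "xs \<in> arrangements" and sum: "sum_list \<alpha> = n" and i: "i < length \<alpha>"
  shows "length (chop \<alpha> xs ! i) = \<alpha> ! i"
    and "\<And>t. t < \<alpha> ! i \<Longrightarrow> map w (chop \<alpha> xs ! i) ! t = perm_of_word xs (sum_list (take i \<alpha>) + 1 + t)"
    and "perm_of_word xs ` block \<alpha> (Suc i) = w ` set (chop \<alpha> xs ! i)"
proof -
  let ?s = "sum_list (take i \<alpha>)" and ?L = "\<alpha> ! i"
  have "?s + ?L = sum_list (take (Suc i) \<alpha>)" using i by (simp add: take_Suc_conv_app_nth)
  then have end_le: "?s + ?L \<le> length xs"
    using sum_take_le_sum_list[of "Suc i" \<alpha>] sum length_arrangement[OF xs] by simp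
  have block_i: "chop \<alpha> xs ! i = take ?L (drop ?s xs)" using nth_chop[OF i] .
  show len: "length (chop \<alpha> xs ! i) = ?L" unfolding block_i using end_le by simp
  show entry: "map w (chop \<alpha> xs ! i) ! t = perm_of_word xs (?s + 1 + t)" if t: "t < ?L" for t
    using t end_le perm_of_word_Suc[of "?s + t" xs] length_arrangement[OF xs]
    unfolding block_i by simp
  show "perm_of_word xs ` block \<alpha> (Suc i) = w ` set (chop \<alpha> xs ! i)"
  proof (intro equalityI subsetI)
    fix y assume "y \<in> perm_of_word xs ` block \<alpha> (Suc i)"
    then obtain j where j: "j \<in> {?s + 1 .. ?s + ?L}" "y = perm_of_word xs j"
      using block_Suc[OF i] by auto
    then obtain t where t: "j = ?s + 1 + t" "t < ?L" by (intro that[of "j - (?s + 1)"]) auto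
    then have "y = w (chop \<alpha> xs ! i ! t)" using entry[OF t(2)] j len by simp
    then show "y \<in> w ` set (chop \<alpha> xs ! i)" using t(2) len by auto
  next
    fix y assume "y \<in> w ` set (chop \<alpha> xs ! i)"
    then obtain t where t: "t < ?L" "y = w (chop \<alpha> xs ! i ! t)"
      using len by (auto simp: in_set_conv_nth)
    then have "y = perm_of_word xs (?s + 1 + t)" using entry[OF t(1)] len by simp
    moreover have "?s + 1 + t \<in> block \<alpha> (Suc i)" using block_Suc[OF i] t by auto
    ultimately show "y \<in> perm_of_word xs ` block \<alpha> (Suc i)" by blast
  qed
qed

lemma alpha_unimodal_perm_of_word_iff:
  assumes xs: "xs \<in> arrangements" and sum: "sum_list \<alpha> = n"
  shows "alpha_unimodal \<alpha> (perm_of_word xs) \<longleftrightarrow> (\<forall>b\<in>set (chop \<alpha> xs). unimodal_list (map w b))"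
proof -
  have "unimodal_on (perm_of_word xs) (block \<alpha> (Suc i)) \<longleftrightarrow> unimodal_list (map w (chop \<alpha> xs ! i))"
    if i: "i < length \<alpha>" for i
    unfolding block_Suc[OF i]
    by (rule unimodal_on_interval_iff) (use nth_chop_block[OF xs sum i] in auto)
  then show ?thesis unfolding alpha_unimodal_def ball_atLeastAtMost_1_iff ball_set_chop_iff by simp
qed

lemma Pblock_perm_of_word:
  assumes xs: "xs \<in> arrangements" and sum: "sum_list \<alpha> = n" and i: "i < length \<alpha>"
  shows "Pblock P w \<alpha> (perm_of_word xs) (Suc i) = set (chop \<alpha> xs ! i)"
proof -
  have "set (chop \<alpha> xs ! i) \<subseteq> set xs"
    unfolding nth_chop[OF i] by (meson set_drop_subset set_take_subset subset_trans)
  then have sub: "set (chop \<alpha> xs ! i) \<subseteq> P" using xs by (simp add: arrangements_def)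
  have "w p \<in> w ` set (chop \<alpha> xs ! i) \<longleftrightarrow> p \<in> set (chop \<alpha> xs ! i)" if "p \<in> P" for p
    using inj_on_image_mem_iff[OF inj_w that sub] .
  then show ?thesis
    unfolding Pblock_def nth_chop_block(3)[OF xs sum i] using sub by blast
qed

lemma unique_minimal_Pblock_perm_of_word_iff:
  assumes xs: "xs \<in> arrangements" and sum: "sum_list \<alpha> = n"
  shows "(\<forall>i\<in>{1..length \<alpha>}. unique_minimal le (Pblock P w \<alpha> (perm_of_word xs) i)) \<longleftrightarrow>
         (\<forall>b\<in>set (chop \<alpha> xs). unique_minimal le (set b))"
  unfolding ball_atLeastAtMost_1_iff ball_set_chop_iff by (simp add: Pblock_perm_of_word[OF xs sum])

lemma perm_of_word_in_Lstar_iff: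
  assumes xs: "xs \<in> arrangements" and \<alpha>: "\<alpha> \<in> compositions n"
  shows "perm_of_word xs \<in> Lstar P le w n \<alpha> \<longleftrightarrow> is_block_decomp le w P (chop \<alpha> xs)"
proof -
  have sum: "sum_list \<alpha> = n" and pos: "0 \<notin> set \<alpha>"
    using \<alpha> by (auto simp: compositions_def composition_iff)
  have "length xs = n" using length_arrangement[OF xs] .
  then have "concat (chop \<alpha> xs) = xs" "map length (chop \<alpha> xs) = \<alpha>"
    using sum concat_chop map_length_chop by auto
  then have "\<forall>b\<in>set (chop \<alpha> xs). b \<noteq> []" using pos by (metis length_0_conv list.set_map imageI)
  then show ?thesis
    unfolding Lstar_def is_block_decomp_def admissible_block_def \<open>concat (chop \<alpha> xs) = xs\<close>
    using perm_of_word_in_linext_iff[OF xs] alpha_unimodal_perm_of_word_iff[OF xs sum]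
      unique_minimal_Pblock_perm_of_word_iff[OF xs sum]
    by blast
qed

lemma card_Lstar_eq:
  assumes \<alpha>: "\<alpha> \<in> compositions n"
  shows "card (Lstar P le w n \<alpha>) = card {bl \<in> block_decomps le w P. map length bl = \<alpha>}"
proof -
  let ?A = "{bl \<in> block_decomps le w P. map length bl = \<alpha>}"
  have sum: "sum_list \<alpha> = n" using \<alpha> by (simp add: compositions_def composition_iff)
  have concat_in: "concat bl \<in> arrangements" if "bl \<in> ?A" for bl
    using that
    by (auto simp: block_decomps_def is_block_decomp_def is_linext_list_def arrangements_def)
  have perm: "\<sigma> permutes {1..n}" if "\<sigma> \<in> Lstar P le w n \<alpha>" for \<sigma>
    using that by (simp add: Lstar_def linext_def)
  have concat_chop_word: "concat (chop \<alpha> (word_of_perm \<sigma>)) = word_of_perm \<sigma>"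
    and length_chop_word: "map length (chop \<alpha> (word_of_perm \<sigma>)) = \<alpha>" if "\<sigma> permutes {1..n}" for \<sigma>
  proof -
    have "sum_list \<alpha> = length (word_of_perm \<sigma>)"
      using sum length_arrangement[OF word_of_perm_in_arrangements[OF that]] by simp
    then show "concat (chop \<alpha> (word_of_perm \<sigma>)) = word_of_perm \<sigma>"
      and "map length (chop \<alpha> (word_of_perm \<sigma>)) = \<alpha>"
      by (simp_all add: concat_chop map_length_chop)
  qed
  have "bij_betw (\<lambda>bl. perm_of_word (concat bl)) ?A (Lstar P le w n \<alpha>)"
  proof (rule bij_betw_byWitness[where f' = "\<lambda>\<sigma>. chop \<alpha> (word_of_perm \<sigma>)"], safe)
    fix bl assume bl: "bl \<in> block_decomps le w P" and shape: "\<alpha> = map length bl"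
    have "concat bl \<in> arrangements" using concat_in bl shape by simp
    then show "chop (map length bl) (word_of_perm (perm_of_word (concat bl))) = bl"
      by (simp add: word_of_perm_of_word chop_concat)
    show "perm_of_word (concat bl) \<in> Lstar P le w n (map length bl)"
      using perm_of_word_in_Lstar_iff[OF \<open>concat bl \<in> arrangements\<close>] \<alpha> bl shape
      by (simp add: chop_concat block_decomps_def)
  next
    fix \<sigma> assume \<sigma>: "\<sigma> \<in> Lstar P le w n \<alpha>"
    have word: "word_of_perm \<sigma> \<in> arrangements" and word_perm: "perm_of_word (word_of_perm \<sigma>) = \<sigma>"
      using perm[OF \<sigma>] by (simp_all add: word_of_perm_in_arrangements perm_of_word_of_perm)
    show "perm_of_word (concat (chop \<alpha> (word_of_perm \<sigma>))) = \<sigma>"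
      using concat_chop_word[OF perm[OF \<sigma>]] word_perm by simp
    show "chop \<alpha> (word_of_perm \<sigma>) \<in> block_decomps le w P"
      using perm_of_word_in_Lstar_iff[OF word \<alpha>] \<sigma> word_perm by (simp add: block_decomps_def)
    show "map length (chop \<alpha> (word_of_perm \<sigma>)) = \<alpha>"
      using length_chop_word[OF perm[OF \<sigma>]] .
  qed
  from bij_betw_same_card[OF this] show ?thesis by simp
qed

lemma map_length_in_compositions:
  "bl \<in> block_decomps le w P \<Longrightarrow> map length bl \<in> compositions n"
  using is_block_decomp_lengths_pos[of le w P bl] sum_list_lengths_block_decomp[of le w P bl] card_P
  by (simp add: compositions_def composition_iff block_decomps_def del: set_map)

end

theorem theorem4p2:
  fixes P :: "'a set" and le :: "'a \<Rightarrow> 'a \<Rightarrow> bool" and w :: "'a \<Rightarrow> nat" and n :: nat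
  assumes "is_poset P le"
    and "card P = n"
    and "bij_betw w P {1..n}"
    and "naturally_labeled P le w"
  shows "\<forall>N (x :: nat \<Rightarrow> real).
           KP P le N x = (\<Sum>\<alpha> \<in> compositions n.
              Psi N \<alpha> x / real (zcoef \<alpha>) * real (card (Lstar P le w n \<alpha>)))"
proof (intro allI)
  fix N and x :: "nat \<Rightarrow> real"
  interpret naturally_labeled_poset_onto P le w n
    using assms by unfold_locales (auto simp: bij_betw_def)
  let ?shape = "\<lambda>\<alpha>. {bl \<in> block_decomps le w P. map length bl = \<alpha>}"
  have "KP P le N x = (\<Sum>bl\<in>block_decomps le w P. Psi_over_z N (map length bl) x)"
    by (rule KP_eq_sum_block_decomps) simp
  also have "\<dots> = (\<Sum>\<alpha>\<in>compositions n. \<Sum>bl\<in>?shape \<alpha>. Psi_over_z N (map length bl) x)"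
    by (rule sum.group[symmetric])
       (auto simp: finite_block_decomps[OF finite_P] finite_compositions map_length_in_compositions)
  also have "\<dots> = (\<Sum>\<alpha>\<in>compositions n. \<Sum>bl\<in>?shape \<alpha>. Psi_over_z N \<alpha> x)"
    by (intro sum.cong refl) simp
  also have "\<dots> = (\<Sum>\<alpha>\<in>compositions n. real (card (?shape \<alpha>)) * Psi_over_z N \<alpha> x)"
    by simp
  also have "\<dots> = (\<Sum>\<alpha>\<in>compositions n. Psi N \<alpha> x / real (zcoef \<alpha>) * real (card (Lstar P le w n \<alpha>)))"
    by (intro sum.cong refl)
       (simp add: card_Lstar_eq Psi_over_z_eq compositions_def composition_iff)
  finally show "KP P le N x =
      (\<Sum>\<alpha>\<in>compositions n. Psi N \<alpha> x / real (zcoef \<alpha>) * real (card (Lstar P le w n \<alpha>)))" .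
qed

end
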